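(* Assume (A1)–(A3) below and $\mathbb E[Y_i^2]<\infty$. For any $\omega\in\Delta^{L-1}$: (a) $\hat\beta_{RT}(\omega)\xrightarrow{p}\beta^*(\omega)=\sum_{\ell=1}^L\omega_\ell\mathrm{Wald}_\ell$; (b) $\sqrt n(\hat\beta_{RT}(\omega)-\beta^*(\omega))\xrightarrow{d}N(0,V_{RT}(\omega))$ with $V_{RT}(\omega)=\omega'\Gamma^{Wald}\omega$, where $$\Gamma^{Wald}_{\ell k}=\frac{\mathbb E[\tilde\epsilon_{i,\ell}\tilde\epsilon_{i,k}(Z_{\ell i}-p_\ell)(Z_{ki}-p_k)]}{\gamma_\ell\gamma_k},$$ $\tilde\epsilon_{i,\ell}=Y_i-\mathrm{Wald}_\ell D_i-c_\ell$ and $c_\ell=\mathbb E[Y_i]-\mathrm{Wald}_\ell\mathbb E[D_i]$.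
   Context: Observe an i.i.d. sample $\{(Y_i,D_i,\mathbf Z_i)\}_{i=1}^n$, $Y_i\in\mathbb R$, $D_i\in\{0,1\}$, $\mathbf Z_i=(Z_{1i},\dots,Z_{Li})'\in\{0,1\}^L$, $L\ge2$; potential outcomes $Y_i(0),Y_i(1)$, compliance type $D_i(\cdot):\{0,1\}^L\to\{0,1\}$, $D_i=D_i(\mathbf Z_i)$, $Y_i=D_iY_i(1)+(1-D_i)Y_i(0)$. $p_\ell=P(Z_{\ell i}=1)$, $\pi_\ell,\rho_\ell$ the differences of $\mathbb E[D_i\mid Z_{\ell i}=z]$, $\mathbb E[Y_i\mid Z_{\ell i}=z]$ between $z=1,0$, $\mathrm{Wald}_\ell=\rho_\ell/\pi_\ell$, $\gamma_\ell=\mathrm{Cov}(D_i,Z_{\ell i})=\pi_\ell p_\ell(1-p_\ell)$, $\Sigma_Z=\mathrm{Var}(\mathbf Z_i)$. $\widehat{\mathrm{Wald}}_\ell=\widehat{\mathrm{Cov}}(Y_i,Z_{\ell i})/\widehat{\mathrm{Cov}}(D_i,Z_{\ell i})$ (sample covariances). For $\omega$ in the simplex $\Delta^{L-1}=\{\omega\in\mathbb R^L:\omega\ge0,\sum\omega_\ell=1\}$, the representative targeting estimator is $\hat\beta_{RT}(\omega)=\sum_\ell\omega_\ell\widehat{\mathrm{Wald}}_\ell$. Assumptions: (A1) $(Y_i(0),Y_i(1),D_i(\cdot))$ independent of $\mathbf Z_i$. (A2) $D_i(z)$ nondecreasing in each coordinate for every $i$. (A3) $p_\ell>0$, $\pi_\ell>0$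 for all $\ell$; $\Sigma_Z$ positive definite. *)

theory Defs
  imports "HOL-Probability.Probability"
begin

text \<open>A unit u of type 'u carries potential outcomes y0 u, y1 u,
  a compliance type dt u :: nat set => bool (the treatment taken under the instrument
  vector z, encoded as the set of switched-on instruments, a subset of {..<L}),
  and the realised instrument vector zz u (a subset of {..<L}).
  The i.i.d. sample is the infinite product (PiM UNIV (%_. P)), unit i = omega i.\<close>

definition Zl :: "('u \<Rightarrow> nat set) \<Rightarrow> nat \<Rightarrow> 'u \<Rightarrow> real" where
  "Zl zz l u = (if l \<in> zz u then 1 else 0)"

definition obsD :: "('u \<Rightarrow> nat set \<Rightarrow> bool) \<Rightarrow> ('u \<Rightarrow> nat set) \<Rightarrow> 'u \<Rightarrow> real" where
  "obsD dt zz u = (if dt u (zz u) then 1 else 0)"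

definition obsY :: "('u \<Rightarrow> real) \<Rightarrow> ('u \<Rightarrow> real) \<Rightarrow> ('u \<Rightarrow> nat set \<Rightarrow> bool)
    \<Rightarrow> ('u \<Rightarrow> nat set) \<Rightarrow> 'u \<Rightarrow> real" where
  "obsY y0 y1 dt zz u = obsD dt zz u * y1 u + (1 - obsD dt zz u) * y0 u"

text \<open>E[f | A] for an event A of positive probability.\<close>
definition cond_mean :: "'u measure \<Rightarrow> ('u \<Rightarrow> real) \<Rightarrow> 'u set \<Rightarrow> real" where
  "cond_mean P f A = (\<integral>u. indicator A u * f u \<partial>P) / measure P A"

definition cov :: "'u measure \<Rightarrow> ('u \<Rightarrow> real) \<Rightarrow> ('u \<Rightarrow> real) \<Rightarrow> real" where
  "cov P f g = (\<integral>u. f u * g u \<partial>P) - (\<integral>u. f u \<partial>P) * (\<integral>u. g u \<partial>P)"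

definition p_inst :: "'u measure \<Rightarrow> ('u \<Rightarrow> nat set) \<Rightarrow> nat \<Rightarrow> real" where
  "p_inst P zz l = measure P {u \<in> space P. l \<in> zz u}"

text \<open>difference of E[f | Z_l = 1] and E[f | Z_l = 0] (gives pi_l for f = D, rho_l for f = Y)\<close>
definition mean_diff :: "'u measure \<Rightarrow> ('u \<Rightarrow> nat set) \<Rightarrow> ('u \<Rightarrow> real) \<Rightarrow> nat \<Rightarrow> real" where
  "mean_diff P zz f l = cond_mean P f {u \<in> space P. l \<in> zz u}
                        - cond_mean P f {u \<in> space P. l \<notin> zz u}"

definition wald :: "'u measure \<Rightarrow> ('u \<Rightarrow> real) \<Rightarrow> ('u \<Rightarrow> real) \<Rightarrow> ('u \<Rightarrow> nat set
    \<Rightarrow> bool) \<Rightarrow> ('u \<Rightarrow> nat set) \<Rightarrow> nat \<Rightarrow> real" where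
  "wald P y0 y1 dt zz l = mean_diff P zz (obsY y0 y1 dt zz) l / mean_diff P zz (obsD dt zz) l"

definition samp_cov :: "nat \<Rightarrow> (nat \<Rightarrow> real) \<Rightarrow> (nat \<Rightarrow> real) \<Rightarrow> real" where
  "samp_cov n x z = (\<Sum>i<n. x i * z i) / real n - ((\<Sum>i<n. x i) / real n) * ((\<Sum>i<n. z i) / real n)"

definition beta_RT :: "nat \<Rightarrow> (nat \<Rightarrow> real) \<Rightarrow> ('u \<Rightarrow> real) \<Rightarrow> ('u \<Rightarrow> real)
    \<Rightarrow> ('u \<Rightarrow> nat set \<Rightarrow> bool) \<Rightarrow> ('u \<Rightarrow> nat set) \<Rightarrow> nat \<Rightarrow> (nat \<Rightarrow> 'u) \<Rightarrow> real" where
  "beta_RT L w y0 y1 dt zz n \<omega> =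
     (\<Sum>l<L. w l * (samp_cov n (\<lambda>i. obsY y0 y1 dt zz (\<omega> i)) (\<lambda>i. Zl zz l (\<omega> i))
                   / samp_cov n (\<lambda>i. obsD dt zz (\<omega> i)) (\<lambda>i. Zl zz l (\<omega> i))))"

definition Gamma_wald :: "'u measure \<Rightarrow> ('u \<Rightarrow> real) \<Rightarrow> ('u \<Rightarrow> real) \<Rightarrow> ('u \<Rightarrow> nat set
    \<Rightarrow> bool) \<Rightarrow> ('u \<Rightarrow> nat set) \<Rightarrow> nat \<Rightarrow> nat \<Rightarrow> real" where
  "Gamma_wald P y0 y1 dt zz l k =
     (let Y = obsY y0 y1 dt zz; D = obsD dt zz;
          c = (\<lambda>j. (\<integral>u. Y u \<partial>P) - wald P y0 y1 dt zz j * (\<integral>u. D u \<partial>P));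
          eps = (\<lambda>j u. Y u - wald P y0 y1 dt zz j * D u - c j)
      in (\<integral>u. eps l u * eps k u * (Zl zz l u - p_inst P zz l) * (Zl zz k u - p_inst P zz k) \<partial>P)
         / (cov P D (Zl zz l) * cov P D (Zl zz k)))"

definition conv_in_prob :: "'a measure \<Rightarrow> (nat \<Rightarrow> 'a \<Rightarrow> real) \<Rightarrow> real \<Rightarrow> bool" where
  "conv_in_prob M X c \<longleftrightarrow>
     (\<forall>e>0. (\<lambda>n. measure M {x \<in> space M. \<bar>X n x - c\<bar> > e}) \<longlonglongrightarrow> 0)"

definition normal_measure :: "real \<Rightarrow> real measure" where
  "normal_measure v = (if v = 0 then return borel 0 else density lborel (normal_density 0 (sqrt v)))"

definition gen_sigma :: "'u measure \<Rightarrow> 'b measure \<Rightarrow> ('u \<Rightarrow> 'b) \<Rightarrow> 'u set set" where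
  "gen_sigma P Mx X = sigma_sets (space P) {X -` A \<inter> space P | A. A \<in> sets Mx}"

end

(* Each Wald ratio is a ratio of two sample covariances sharing the instrument Z_l.  After
   centring at population means, Cov^(Y,Z_l) - Wald_l Cov^(D,Z_l) is the sample mean of
   eps_l (Z_l - p_l) up to a product of two sample means, while Cov^(D,Z_l) tends to
   gamma_l > 0.  By Chebyshev's inequality sqrt n times a centred sample mean is bounded in
   probability and the sample mean itself is negligible, so that
     sqrt n (Wald^_l - Wald_l) = n^(-1/2) sum_i psi_l(X_i) + o_P(1),
     psi_l = eps_l (Z_l - p_l) / gamma_l.
   The estimator is a fixed linear combination of the Wald ratios, hence asymptotically linear
   with influence function psi = sum_l w_l psi_l.  Consistency follows, and the Lindeberg-Levy
   central limit theorem with Slutsky's lemma gives the normal limit with variance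
   E psi^2 = w' Gamma^Wald w (a point mass when this vanishes). *)

theory Submission
  imports Defs
begin

section \<open>Stochastic order symbols\<close>

(* o_P(1) and O_P(1) are phrased through measurable covers (outer probability), so that the
   calculus below needs no measurability side conditions; these only enter where it is linked
   to conv_in_prob and to weak convergence. *)
definition outer_prob_le :: "'a measure \<Rightarrow> 'a set \<Rightarrow> real \<Rightarrow> bool" where
  "outer_prob_le M A \<delta> \<longleftrightarrow> (\<exists>B\<in>sets M. A \<subseteq> B \<and> measure M B \<le> \<delta>)"

definition asymp_null :: "'a measure \<Rightarrow> (nat \<Rightarrow> 'a set) \<Rightarrow> bool" where
  "asymp_null M A \<longleftrightarrow> (\<forall>\<delta>>0. eventually (\<lambda>n. outer_prob_le M (A n) \<delta>) sequentially)"

definition vanishes_in_prob :: "'a measure \<Rightarrow> (nat \<Rightarrow> 'a \<Rightarrow> real) \<Rightarrow> bool" where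
  "vanishes_in_prob M X \<longleftrightarrow> (\<forall>e>0. asymp_null M (\<lambda>n. {x \<in> space M. e < \<bar>X n x\<bar>}))"

definition bounded_in_prob :: "'a measure \<Rightarrow> (nat \<Rightarrow> 'a \<Rightarrow> real) \<Rightarrow> bool" where
  "bounded_in_prob M X \<longleftrightarrow>
     (\<forall>\<delta>>0. \<exists>K. eventually (\<lambda>n. outer_prob_le M {x \<in> space M. K < \<bar>X n x\<bar>} \<delta>) sequentially)"

lemma outer_prob_le_mono: "outer_prob_le M A' \<delta> \<Longrightarrow> A \<subseteq> A' \<Longrightarrow> outer_prob_le M A \<delta>"
  unfolding outer_prob_le_def by blast

lemma outer_prob_le_Un:
  assumes "outer_prob_le M A \<delta>" "outer_prob_le M A' \<delta>'"
  shows "outer_prob_le M (A \<union> A') (\<delta> + \<delta>')"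
proof -
  obtain B B' where "B \<in> sets M" "A \<subseteq> B" "measure M B \<le> \<delta>"
    and "B' \<in> sets M" "A' \<subseteq> B'" "measure M B' \<le> \<delta>'"
    using assms unfolding outer_prob_le_def by blast
  then show ?thesis
    unfolding outer_prob_le_def
    by (intro bexI[of _ "B \<union> B'"]) (auto intro: order.trans[OF measure_Un_le])
qed

lemma outer_prob_le_measure: "A \<in> sets M \<Longrightarrow> measure M A \<le> \<delta> \<Longrightarrow> outer_prob_le M A \<delta>"
  unfolding outer_prob_le_def by blast

lemma asymp_null_mono: "asymp_null M A' \<Longrightarrow> (\<And>n. A n \<subseteq> A' n) \<Longrightarrow> asymp_null M A"
  unfolding asymp_null_def by (metis (mono_tags, lifting) eventually_mono outer_prob_le_mono)

lemma asymp_null_Un: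
  assumes "asymp_null M A" "asymp_null M A'"
  shows "asymp_null M (\<lambda>n. A n \<union> A' n)"
  unfolding asymp_null_def
proof (intro allI impI)
  fix \<delta> :: real assume "\<delta> > 0"
  then have "eventually (\<lambda>n. outer_prob_le M (A n) (\<delta>/2) \<and> outer_prob_le M (A' n) (\<delta>/2))
      sequentially"
    using assms unfolding asymp_null_def by (auto intro: eventually_conj)
  then show "eventually (\<lambda>n. outer_prob_le M (A n \<union> A' n) \<delta>) sequentially"
    by eventually_elim (metis outer_prob_le_Un field_sum_of_halves)
qed

lemma vanishes_in_prob_dominated:
  assumes X: "vanishes_in_prob M X" and Y: "vanishes_in_prob M Y"
    and le: "\<And>n x. x \<in> space M \<Longrightarrow> \<bar>Z n x\<bar> \<le> \<bar>X n x\<bar> + \<bar>Y n x\<bar>"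
  shows "vanishes_in_prob M Z"
  unfolding vanishes_in_prob_def
proof (intro allI impI)
  fix e :: real assume "e > 0"
  then have "e/2 > 0" by simp
  then have "asymp_null M (\<lambda>n. {x \<in> space M. e/2 < \<bar>X n x\<bar>})"
    and "asymp_null M (\<lambda>n. {x \<in> space M. e/2 < \<bar>Y n x\<bar>})"
    using X Y unfolding vanishes_in_prob_def by blast+
  then have "asymp_null M (\<lambda>n. {x \<in> space M. e/2 < \<bar>X n x\<bar>} \<union> {x \<in> space M. e/2 < \<bar>Y n x\<bar>})"
    by (rule asymp_null_Un)
  moreover have "{x \<in> space M. e < \<bar>Z n x\<bar>}
      \<subseteq> {x \<in> space M. e/2 < \<bar>X n x\<bar>} \<union> {x \<in> space M. e/2 < \<bar>Y n x\<bar>}" for n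
  proof (intro subsetI)
    fix x assume "x \<in> {x \<in> space M. e < \<bar>Z n x\<bar>}"
    with le[of x n] show "x \<in> {x \<in> space M. e/2 < \<bar>X n x\<bar>} \<union> {x \<in> space M. e/2 < \<bar>Y n x\<bar>}"
      by auto
  qed
  ultimately show "asymp_null M (\<lambda>n. {x \<in> space M. e < \<bar>Z n x\<bar>})"
    by (rule asymp_null_mono)
qed

lemma vanishes_in_prob_add:
  "vanishes_in_prob M X \<Longrightarrow> vanishes_in_prob M Y \<Longrightarrow> vanishes_in_prob M (\<lambda>n x. X n x + Y n x)"
  by (erule vanishes_in_prob_dominated) (auto intro: abs_triangle_ineq)

lemma vanishes_in_prob_diff:
  "vanishes_in_prob M X \<Longrightarrow> vanishes_in_prob M Y \<Longrightarrow> vanishes_in_prob M (\<lambda>n x. X n x - Y n x)"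
  by (erule vanishes_in_prob_dominated) (auto intro: abs_triangle_ineq4)

lemma vanishes_in_prob_zero: "vanishes_in_prob M (\<lambda>n x. 0)"
  unfolding vanishes_in_prob_def asymp_null_def outer_prob_le_def by (auto intro!: bexI[of _ "{}"])

lemma bounded_in_prob_const: "bounded_in_prob M (\<lambda>n x. c)"
  unfolding bounded_in_prob_def outer_prob_le_def by (auto intro!: exI[of _ "\<bar>c\<bar>"] bexI[of _ "{}"])

lemma bounded_in_prob_add:
  assumes X: "bounded_in_prob M X" and Y: "bounded_in_prob M Y"
  shows "bounded_in_prob M (\<lambda>n x. X n x + Y n x)"
  unfolding bounded_in_prob_def
proof (intro allI impI)
  fix \<delta> :: real assume "\<delta> > 0"
  then obtain K K' where
    "eventually (\<lambda>n. outer_prob_le M {x \<in> space M. K < \<bar>X n x\<bar>} (\<delta>/2)) sequentially"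
    "eventually (\<lambda>n. outer_prob_le M {x \<in> space M. K' < \<bar>Y n x\<bar>} (\<delta>/2)) sequentially"
    using X Y unfolding bounded_in_prob_def by (meson half_gt_zero)
  then have "eventually (\<lambda>n. outer_prob_le M {x \<in> space M. K + K' < \<bar>X n x + Y n x\<bar>} \<delta>)
      sequentially"
  proof eventually_elim
    case (elim n)
    have "{x \<in> space M. K + K' < \<bar>X n x + Y n x\<bar>}
        \<subseteq> {x \<in> space M. K < \<bar>X n x\<bar>} \<union> {x \<in> space M. K' < \<bar>Y n x\<bar>}"
      by (auto simp: abs_if split: if_splits)
    then have "outer_prob_le M {x \<in> space M. K + K' < \<bar>X n x + Y n x\<bar>} (\<delta>/2 + \<delta>/2)"
      by (rule outer_prob_le_mono[OF outer_prob_le_Un[OF elim]])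
    then show ?case by (simp only: field_sum_of_halves)
  qed
  then show "\<exists>K. eventually (\<lambda>n. outer_prob_le M {x \<in> space M. K < \<bar>X n x + Y n x\<bar>} \<delta>)
      sequentially" ..
qed

lemma vanishes_in_prob_imp_bounded_in_prob:
  assumes "vanishes_in_prob M (\<lambda>n x. X n x - c)"
  shows "bounded_in_prob M X"
  unfolding bounded_in_prob_def
proof (intro allI impI exI)
  fix \<delta> :: real assume "\<delta> > 0"
  then have "eventually (\<lambda>n. outer_prob_le M {x \<in> space M. 1 < \<bar>X n x - c\<bar>} \<delta>) sequentially"
    using assms unfolding vanishes_in_prob_def asymp_null_def by simp
  then show "eventually (\<lambda>n. outer_prob_le M {x \<in> space M. \<bar>c\<bar> + 1 < \<bar>X n x\<bar>} \<delta>) sequentially"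
    by eventually_elim (erule outer_prob_le_mono, auto simp: abs_if split: if_splits)
qed

lemma bounded_in_prob_mult_vanishes:
  assumes X: "bounded_in_prob M X" and Y: "vanishes_in_prob M Y"
  shows "vanishes_in_prob M (\<lambda>n x. X n x * Y n x)"
  unfolding vanishes_in_prob_def asymp_null_def
proof (intro allI impI)
  fix e \<delta> :: real assume e: "e > 0" and "\<delta> > 0"
  then obtain K where K:
    "eventually (\<lambda>n. outer_prob_le M {x \<in> space M. K < \<bar>X n x\<bar>} (\<delta>/2)) sequentially"
    using X unfolding bounded_in_prob_def by (meson half_gt_zero)
  define K' where "K' = max K 1"
  have K': "K' > 0" "K \<le> K'" unfolding K'_def by auto
  have "eventually (\<lambda>n. outer_prob_le M {x \<in> space M. e / K' < \<bar>Y n x\<bar>} (\<delta>/2)) sequentially"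
    using Y e K' \<open>\<delta> > 0\<close> unfolding vanishes_in_prob_def asymp_null_def by simp
  with K show "eventually (\<lambda>n. outer_prob_le M {x \<in> space M. e < \<bar>X n x * Y n x\<bar>} \<delta>) sequentially"
  proof eventually_elim
    case (elim n)
    have "{x \<in> space M. e < \<bar>X n x * Y n x\<bar>}
        \<subseteq> {x \<in> space M. K < \<bar>X n x\<bar>} \<union> {x \<in> space M. e / K' < \<bar>Y n x\<bar>}"
    proof (rule subsetI, rule ccontr)
      fix x assume x: "x \<in> {x \<in> space M. e < \<bar>X n x * Y n x\<bar>}"
        and "x \<notin> {x \<in> space M. K < \<bar>X n x\<bar>} \<union> {x \<in> space M. e / K' < \<bar>Y n x\<bar>}"
      then have "\<bar>X n x\<bar> \<le> K'" "\<bar>Y n x\<bar> \<le> e / K'" using K' by auto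
      then have "\<bar>X n x * Y n x\<bar> \<le> K' * (e / K')" unfolding abs_mult by (intro mult_mono) auto
      then show False using x K' by simp
    qed
    then have "outer_prob_le M {x \<in> space M. e < \<bar>X n x * Y n x\<bar>} (\<delta>/2 + \<delta>/2)"
      by (rule outer_prob_le_mono[OF outer_prob_le_Un[OF elim]])
    then show ?case by (simp only: field_sum_of_halves)
  qed
qed

lemma vanishes_in_prob_cmult: "vanishes_in_prob M X \<Longrightarrow> vanishes_in_prob M (\<lambda>n x. c * X n x)"
  by (rule bounded_in_prob_mult_vanishes[OF bounded_in_prob_const])

lemma vanishes_in_prob_sum:
  "finite I \<Longrightarrow> (\<And>i. i \<in> I \<Longrightarrow> vanishes_in_prob M (X i))
    \<Longrightarrow> vanishes_in_prob M (\<lambda>n x. \<Sum>i\<in>I. c i * X i n x)"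
proof (induction I rule: finite_induct)
  case (insert i I)
  have "vanishes_in_prob M (\<lambda>n x. c i * X i n x + (\<Sum>i\<in>I. c i * X i n x))"
    by (rule vanishes_in_prob_add[OF vanishes_in_prob_cmult]) (use insert in auto)
  then show ?case using insert by simp
qed (simp add: vanishes_in_prob_zero)

lemma vanishes_in_prob_if_sqrt_scaled_bounded:
  assumes "bounded_in_prob M (\<lambda>n x. sqrt (real n) * X n x)"
  shows "vanishes_in_prob M X"
  unfolding vanishes_in_prob_def asymp_null_def
proof (intro allI impI)
  fix e \<delta> :: real assume e: "e > 0" and "\<delta> > 0"
  then obtain K where K:
    "eventually (\<lambda>n. outer_prob_le M {x \<in> space M. K < \<bar>sqrt (real n) * X n x\<bar>} \<delta>) sequentially"
    using assms unfolding bounded_in_prob_def by blast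
  have "filterlim (\<lambda>n. sqrt (real n)) at_top sequentially"
    by (rule filterlim_compose[OF sqrt_at_top filterlim_real_sequentially])
  then have "eventually (\<lambda>n. K / e < sqrt (real n)) sequentially"
    by (simp add: filterlim_at_top_dense)
  with K show "eventually (\<lambda>n. outer_prob_le M {x \<in> space M. e < \<bar>X n x\<bar>} \<delta>) sequentially"
  proof eventually_elim
    case (elim n)
    have "{x \<in> space M. e < \<bar>X n x\<bar>} \<subseteq> {x \<in> space M. K < \<bar>sqrt (real n) * X n x\<bar>}"
    proof safe
      fix x assume "e < \<bar>X n x\<bar>"
      have "K < e * sqrt (real n)" using elim(2) e by (simp add: pos_divide_less_eq mult.commute)
      also have "\<dots> \<le> \<bar>X n x\<bar> * sqrt (real n)" using \<open>e < \<bar>X n x\<bar>\<close> by (intro mult_right_mono) auto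
      finally show "K < \<bar>sqrt (real n) * X n x\<bar>" by (simp add: abs_mult mult.commute)
    qed
    then show ?case using elim(1) by (rule outer_prob_le_mono[rotated])
  qed
qed

lemma vanishes_in_prob_eventually_cong:
  assumes X: "vanishes_in_prob M X"
    and eq: "eventually (\<lambda>n. \<forall>x\<in>space M. Y n x = X n x) sequentially"
  shows "vanishes_in_prob M Y"
  unfolding vanishes_in_prob_def asymp_null_def
proof (intro allI impI)
  fix e \<delta> :: real assume "e > 0" "\<delta> > 0"
  with X have "eventually (\<lambda>n. outer_prob_le M {x \<in> space M. e < \<bar>X n x\<bar>} \<delta>) sequentially"
    unfolding vanishes_in_prob_def asymp_null_def by blast
  with eq show "eventually (\<lambda>n. outer_prob_le M {x \<in> space M. e < \<bar>Y n x\<bar>} \<delta>) sequentially"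
    by eventually_elim (erule outer_prob_le_mono, auto)
qed

lemma abs_inverse_diff_le:
  fixes x c :: real
  assumes c: "c \<noteq> 0" and x: "\<bar>x - c\<bar> \<le> \<bar>c\<bar> / 2"
  shows "\<bar>inverse x - inverse c\<bar> \<le> 2 * \<bar>x - c\<bar> / c\<^sup>2"
proof -
  have xc: "\<bar>c\<bar> / 2 \<le> \<bar>x\<bar>" using x by linarith
  then have "x \<noteq> 0" using c by auto
  then have "\<bar>inverse x - inverse c\<bar> = \<bar>x - c\<bar> / (\<bar>x\<bar> * \<bar>c\<bar>)"
    using c by (simp add: inverse_diff_inverse abs_mult divide_inverse abs_minus_commute)
  also have "\<dots> \<le> \<bar>x - c\<bar> / (\<bar>c\<bar> / 2 * \<bar>c\<bar>)"
    using c xc by (intro divide_left_mono mult_right_mono mult_pos_pos) auto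
  also have "\<dots> = 2 * \<bar>x - c\<bar> / c\<^sup>2" by (simp add: power2_eq_square abs_mult_self_eq)
  finally show ?thesis .
qed

lemma vanishes_in_prob_inverse:
  assumes X: "vanishes_in_prob M (\<lambda>n x. X n x - c)" and c: "c \<noteq> 0"
  shows "vanishes_in_prob M (\<lambda>n x. inverse (X n x) - inverse c)"
  unfolding vanishes_in_prob_def
proof (intro allI impI)
  fix e :: real assume e: "e > 0"
  define \<eta> where "\<eta> = min (\<bar>c\<bar> / 2) (e * c\<^sup>2 / 2)"
  have "\<eta> > 0" using e c unfolding \<eta>_def by simp
  then have "asymp_null M (\<lambda>n. {x \<in> space M. \<eta> < \<bar>X n x - c\<bar>})"
    using X unfolding vanishes_in_prob_def by blast
  moreover have "{x \<in> space M. e < \<bar>inverse (X n x) - inverse c\<bar>}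
      \<subseteq> {x \<in> space M. \<eta> < \<bar>X n x - c\<bar>}" for n
  proof safe
    fix x assume "x \<in> space M" and gt: "e < \<bar>inverse (X n x) - inverse c\<bar>"
    show "\<eta> < \<bar>X n x - c\<bar>"
    proof (rule ccontr)
      assume "\<not> \<eta> < \<bar>X n x - c\<bar>"
      then have le: "\<bar>X n x - c\<bar> \<le> \<eta>" by simp
      then have "\<bar>inverse (X n x) - inverse c\<bar> \<le> 2 * \<bar>X n x - c\<bar> / c\<^sup>2"
        using c by (intro abs_inverse_diff_le) (auto simp: \<eta>_def)
      also have "\<dots> \<le> 2 * (e * c\<^sup>2 / 2) / c\<^sup>2"
        using le by (intro divide_right_mono mult_left_mono) (auto simp: \<eta>_def)
      also have "\<dots> = e" using c by simp
      finally show False using gt by simp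
    qed
  qed
  ultimately show "asymp_null M (\<lambda>n. {x \<in> space M. e < \<bar>inverse (X n x) - inverse c\<bar>})"
    by (rule asymp_null_mono)
qed

lemma vanishes_in_prob_cong_nonzero:
  assumes Z: "vanishes_in_prob M (\<lambda>n x. Z n x - c)" and c: "c \<noteq> 0"
    and X: "vanishes_in_prob M X"
    and eq: "\<And>n x. x \<in> space M \<Longrightarrow> Z n x \<noteq> 0 \<Longrightarrow> Y n x = X n x"
  shows "vanishes_in_prob M Y"
  unfolding vanishes_in_prob_def
proof (intro allI impI)
  fix e :: real assume "e > 0"
  moreover have "\<bar>c\<bar> / 2 > 0" using c by simp
  ultimately have "asymp_null M (\<lambda>n. {x \<in> space M. e < \<bar>X n x\<bar>})"
    and "asymp_null M (\<lambda>n. {x \<in> space M. \<bar>c\<bar> / 2 < \<bar>Z n x - c\<bar>})"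
    using X Z unfolding vanishes_in_prob_def by blast+
  then have "asymp_null M (\<lambda>n. {x \<in> space M. e < \<bar>X n x\<bar>} \<union> {x \<in> space M. \<bar>c\<bar> / 2 < \<bar>Z n x - c\<bar>})"
    by (rule asymp_null_Un)
  moreover have "{x \<in> space M. e < \<bar>Y n x\<bar>}
      \<subseteq> {x \<in> space M. e < \<bar>X n x\<bar>} \<union> {x \<in> space M. \<bar>c\<bar> / 2 < \<bar>Z n x - c\<bar>}" for n
    using eq c by fastforce
  ultimately show "asymp_null M (\<lambda>n. {x \<in> space M. e < \<bar>Y n x\<bar>})"
    by (rule asymp_null_mono)
qed

lemma (in finite_measure) conv_in_prob_if_vanishes:
  assumes "vanishes_in_prob M (\<lambda>n x. X n x - c)"
  shows "conv_in_prob M X c"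
  unfolding conv_in_prob_def
proof (intro allI impI order_tendstoI)
  fix e a :: real assume "e > 0" "a > 0"
  then have "eventually (\<lambda>n. outer_prob_le M {x \<in> space M. e < \<bar>X n x - c\<bar>} (a/2)) sequentially"
    using assms unfolding vanishes_in_prob_def asymp_null_def by simp
  then show "eventually (\<lambda>n. measure M {x \<in> space M. \<bar>X n x - c\<bar> > e} < a) sequentially"
  proof eventually_elim
    case (elim n)
    then obtain B where "B \<in> sets M" "{x \<in> space M. e < \<bar>X n x - c\<bar>} \<subseteq> B" "measure M B \<le> a/2"
      unfolding outer_prob_le_def by blast
    then have "measure M {x \<in> space M. e < \<bar>X n x - c\<bar>} \<le> a/2"
      using finite_measure_mono by (meson order_trans)
    then show ?case using \<open>a > 0\<close> by simp
  qed
qed (simp add: order_less_le_trans[OF _ measure_nonneg])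

section \<open>Slutsky's lemma and normal limits\<close>

lemma cdf_distr_eq:
  assumes "X \<in> borel_measurable M"
  shows "cdf (distr M borel X) x = measure M {\<omega> \<in> space M. X \<omega> \<le> x}"
  unfolding cdf_def2 using assms
  by (subst measure_distr) (auto intro!: arg_cong[where f="measure M"])

lemma (in prob_space) prob_le_shift:
  fixes X Y :: "'a \<Rightarrow> real"
  assumes [measurable]: "X \<in> borel_measurable M" "Y \<in> borel_measurable M"
    and B: "B \<in> sets M" "{\<omega> \<in> space M. d < \<bar>Y \<omega> - X \<omega>\<bar>} \<subseteq> B"
  shows "prob {\<omega> \<in> space M. Y \<omega> \<le> t} \<le> prob {\<omega> \<in> space M. X \<omega> \<le> t + d} + prob B"
proof -
  have "{\<omega> \<in> space M. Y \<omega> \<le> t} \<subseteq> {\<omega> \<in> space M. X \<omega> \<le> t + d} \<union> B"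
  proof safe
    fix \<omega> assume "\<omega> \<in> space M" "Y \<omega> \<le> t" "\<omega> \<notin> B"
    then have "\<not> d < \<bar>Y \<omega> - X \<omega>\<bar>" using B(2) by blast
    then show "X \<omega> \<le> t + d" using \<open>Y \<omega> \<le> t\<close> by arith
  qed
  then have "prob {\<omega> \<in> space M. Y \<omega> \<le> t} \<le> prob ({\<omega> \<in> space M. X \<omega> \<le> t + d} \<union> B)"
    using B(1) by (intro finite_measure_mono) auto
  also have "\<dots> \<le> prob {\<omega> \<in> space M. X \<omega> \<le> t + d} + prob B"
    using B(1) by (intro measure_Un_le) auto
  finally show ?thesis .
qed

lemma (in prob_space) slutsky:
  fixes X Y :: "nat \<Rightarrow> 'a \<Rightarrow> real"
  assumes X: "\<And>n. X n \<in> borel_measurable M" and Y: "\<And>n. Y n \<in> borel_measurable M"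
    and cont: "\<And>x. isCont (cdf \<mu>) x"
    and conv: "weak_conv_m (\<lambda>n. distr M borel (X n)) \<mu>"
    and V: "vanishes_in_prob M (\<lambda>n \<omega>. Y n \<omega> - X n \<omega>)"
  shows "weak_conv_m (\<lambda>n. distr M borel (Y n)) \<mu>"
  unfolding weak_conv_m_def weak_conv_def
proof (intro allI impI)
  fix x :: real
  let ?F = "cdf \<mu>"
  have FX: "(\<lambda>n. prob {\<omega> \<in> space M. X n \<omega> \<le> y}) \<longlonglongrightarrow> ?F y" for y
    using conv cont[of y] unfolding weak_conv_m_def weak_conv_def by (simp add: cdf_distr_eq[OF X])
  show "(\<lambda>n. cdf (distr M borel (Y n)) x) \<longlonglongrightarrow> ?F x"
    unfolding cdf_distr_eq[OF Y]
  proof (rule tendstoI)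
    fix r :: real assume r: "r > 0"
    obtain s where s: "s > 0" "\<And>y. y \<noteq> x \<and> norm (y - x) < s \<longrightarrow> norm (?F y - ?F x) < r/4"
      using LIM_D[OF cont[of x, unfolded isCont_def], of "r/4"] r by auto
    define d where "d = s/2"
    have d: "d > 0" "\<bar>?F (x + d) - ?F x\<bar> < r/4" "\<bar>?F (x - d) - ?F x\<bar> < r/4"
      using s(1) s(2)[of "x + d"] s(2)[of "x - d"] by (auto simp: d_def)
    have "r/4 > 0" using r by simp
    then have "eventually (\<lambda>n. \<bar>prob {\<omega> \<in> space M. X n \<omega> \<le> x + d} - ?F (x + d)\<bar> < r/4) sequentially"
      and "eventually (\<lambda>n. \<bar>prob {\<omega> \<in> space M. X n \<omega> \<le> x - d} - ?F (x - d)\<bar> < r/4) sequentially"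
      and "eventually (\<lambda>n. outer_prob_le M {\<omega> \<in> space M. d < \<bar>Y n \<omega> - X n \<omega>\<bar>} (r/4)) sequentially"
      using tendstoD[OF FX] V d(1)
      unfolding vanishes_in_prob_def asymp_null_def dist_real_def by blast+
    then show "eventually (\<lambda>n. dist (prob {\<omega> \<in> space M. Y n \<omega> \<le> x}) (?F x) < r) sequentially"
    proof eventually_elim
      case (elim n)
      then obtain B where B: "B \<in> sets M" "{\<omega> \<in> space M. d < \<bar>Y n \<omega> - X n \<omega>\<bar>} \<subseteq> B" "prob B \<le> r/4"
        unfolding outer_prob_le_def by blast
      have "prob {\<omega> \<in> space M. Y n \<omega> \<le> x} \<le> prob {\<omega> \<in> space M. X n \<omega> \<le> x + d} + prob B"
        by (rule prob_le_shift[OF X Y B(1,2)])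
      moreover have "prob {\<omega> \<in> space M. X n \<omega> \<le> x - d}
          \<le> prob {\<omega> \<in> space M. Y n \<omega> \<le> x - d + d} + prob B"
        using B(2) by (intro prob_le_shift[OF Y X B(1)]) (auto simp: abs_minus_commute)
      ultimately show ?case
        using elim(1,2) d(2,3) B(3) unfolding dist_real_def abs_less_iff by simp
    qed
  qed
qed

lemma (in prob_space) weak_conv_m_return_zero:
  fixes Y :: "nat \<Rightarrow> 'a \<Rightarrow> real"
  assumes Y: "\<And>n. Y n \<in> borel_measurable M" and V: "vanishes_in_prob M Y"
  shows "weak_conv_m (\<lambda>n. distr M borel (Y n)) (return borel 0)"
  unfolding weak_conv_m_def weak_conv_def
proof (intro allI impI)
  fix x :: real assume cont: "isCont (cdf (return borel 0)) x"
  interpret R: real_distribution "return borel (0::real)"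
    by (simp add: real_distribution_def real_distribution_axioms_def prob_space_return)
  have "x \<noteq> 0"
    using cont R.isCont_cdf by (auto simp: measure_return)
  have F: "cdf (return borel 0) x = (if 0 \<le> x then 1 else 0)"
    unfolding cdf_def2 by (simp add: measure_return)
  show "(\<lambda>n. cdf (distr M borel (Y n)) x) \<longlonglongrightarrow> cdf (return borel 0) x"
    unfolding cdf_distr_eq[OF Y] F
  proof (rule tendstoI)
    fix r :: real assume "r > 0"
    moreover have "\<bar>x\<bar> / 2 > 0" using \<open>x \<noteq> 0\<close> by simp
    ultimately have "eventually (\<lambda>n.
        outer_prob_le M {\<omega> \<in> space M. \<bar>x\<bar> / 2 < \<bar>Y n \<omega>\<bar>} (r/2)) sequentially"
      using V unfolding vanishes_in_prob_def asymp_null_def by (meson half_gt_zero)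
    then show "eventually (\<lambda>n.
        dist (prob {\<omega> \<in> space M. Y n \<omega> \<le> x}) (if 0 \<le> x then 1 else 0) < r) sequentially"
    proof eventually_elim
      case (elim n)
      then obtain B where B: "B \<in> sets M" "{\<omega> \<in> space M. \<bar>x\<bar> / 2 < \<bar>Y n \<omega>\<bar>} \<subseteq> B" "prob B \<le> r/2"
        unfolding outer_prob_le_def by blast
      have [measurable]: "Y n \<in> borel_measurable M" by (rule Y)
      show ?case
      proof (cases "0 \<le> x")
        case True
        then have "space M \<subseteq> {\<omega> \<in> space M. Y n \<omega> \<le> x} \<union> B"
          using B(2) by force
        moreover have "{\<omega> \<in> space M. Y n \<omega> \<le> x} \<in> sets M" by measurable
        ultimately have "1 \<le> prob ({\<omega> \<in> space M. Y n \<omega> \<le> x} \<union> B)"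
          using B(1) prob_space by (metis finite_measure_mono sets.Un)
        also have "\<dots> \<le> prob {\<omega> \<in> space M. Y n \<omega> \<le> x} + prob B"
          using B(1) by (intro measure_Un_le) auto
        finally show ?thesis using True B(3) \<open>r > 0\<close> prob_le_1 by (simp add: dist_real_def)
      next
        case False
        then have "{\<omega> \<in> space M. Y n \<omega> \<le> x} \<subseteq> B" using B(2) by force
        then have "prob {\<omega> \<in> space M. Y n \<omega> \<le> x} \<le> prob B" using B(1) by (rule finite_measure_mono)
        then show ?thesis using False B(3) \<open>r > 0\<close> by (simp add: dist_real_def)
      qed
    qed
  qed
qed

lemma isCont_cdf_std_normal: "isCont (cdf std_normal_distribution) x"
proof -
  interpret real_distribution std_normal_distribution by (rule real_dist_normal_dist)
  have "emeasure std_normal_distribution {x} = 0"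
    by (subst emeasure_density) (auto intro!: nn_integral_null_set finite_imp_null_set_lborel)
  then show ?thesis by (simp add: isCont_cdf measure_def)
qed

lemma cdf_normal_measure:
  assumes s: "\<sigma> > 0"
  shows "cdf (normal_measure (\<sigma>\<^sup>2)) x = cdf std_normal_distribution (x / \<sigma>)"
proof -
  interpret S: prob_space std_normal_distribution using prob_space_normal_density by simp
  have "distributed std_normal_distribution lborel (\<lambda>x. x) std_normal_density"
    unfolding distributed_def by (auto simp: distr_id2)
  then have "distributed std_normal_distribution lborel (\<lambda>y. 0 + \<sigma> * y)
      (normal_density (0 + \<sigma> * 0) (\<bar>\<sigma>\<bar> * 1))"
    by (rule S.normal_density_affine) (use s in auto)
  then have "normal_measure (\<sigma>\<^sup>2) = distr std_normal_distribution lborel (\<lambda>y. \<sigma> * y)"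
    using s unfolding distributed_def normal_measure_def by simp
  then have "cdf (normal_measure (\<sigma>\<^sup>2)) x
      = measure std_normal_distribution ((\<lambda>y. \<sigma> * y) -` {..x} \<inter> space std_normal_distribution)"
    unfolding cdf_def2 by (simp add: measure_distr)
  also have "(\<lambda>y. \<sigma> * y) -` {..x} \<inter> space std_normal_distribution = {..x / \<sigma>}"
    using s by (auto simp: pos_le_divide_eq mult.commute)
  finally show ?thesis unfolding cdf_def2 .
qed

lemma isCont_cdf_normal_measure:
  assumes "\<sigma> > 0" shows "isCont (cdf (normal_measure (\<sigma>\<^sup>2))) x"
proof -
  have "cdf (normal_measure (\<sigma>\<^sup>2)) = (\<lambda>x. cdf std_normal_distribution (x / \<sigma>))"
    using cdf_normal_measure[OF assms] by blast
  moreover have "isCont (\<lambda>x. x / \<sigma>) x" using assms by (auto intro!: continuous_intros)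
  ultimately show ?thesis
    using continuous_at_compose[OF _ isCont_cdf_std_normal] by (simp add: comp_def)
qed

lemma weak_conv_m_scale_std_normal:
  assumes s: "\<sigma> > 0" and X: "\<And>n. X n \<in> borel_measurable M"
    and conv: "weak_conv_m (\<lambda>n. distr M borel (X n)) std_normal_distribution"
  shows "weak_conv_m (\<lambda>n. distr M borel (\<lambda>\<omega>. \<sigma> * X n \<omega>)) (normal_measure (\<sigma>\<^sup>2))"
  unfolding weak_conv_m_def weak_conv_def
proof (intro allI impI)
  fix x :: real
  have "(\<lambda>\<omega>. \<sigma> * X n \<omega>) \<in> borel_measurable M" for n using X by measurable
  moreover have "{\<omega> \<in> space M. \<sigma> * X n \<omega> \<le> x} = {\<omega> \<in> space M. X n \<omega> \<le> x / \<sigma>}" for n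
    using s by (auto simp: pos_le_divide_eq mult.commute)
  moreover have "(\<lambda>n. cdf (distr M borel (X n)) (x / \<sigma>)) \<longlonglongrightarrow> cdf std_normal_distribution (x / \<sigma>)"
    using conv isCont_cdf_std_normal unfolding weak_conv_m_def weak_conv_def by blast
  ultimately show "(\<lambda>n. cdf (distr M borel (\<lambda>\<omega>. \<sigma> * X n \<omega>)) x) \<longlonglongrightarrow> cdf (normal_measure (\<sigma>\<^sup>2)) x"
    by (simp add: cdf_normal_measure[OF s] cdf_distr_eq X)
qed

section \<open>Square-integrable functions\<close>

definition square_integrable :: "'a measure \<Rightarrow> ('a \<Rightarrow> real) \<Rightarrow> bool" where
  "square_integrable M f \<longleftrightarrow> f \<in> borel_measurable M \<and> integrable M (\<lambda>x. (f x)\<^sup>2)"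

lemma square_integrable_measurable: "square_integrable M f \<Longrightarrow> f \<in> borel_measurable M"
  unfolding square_integrable_def by blast

lemma square_integrable_integrable_square:
  "square_integrable M f \<Longrightarrow> integrable M (\<lambda>x. (f x)\<^sup>2)"
  unfolding square_integrable_def by blast

lemma integrable_mult_square_integrable:
  assumes f: "square_integrable M f" and g: "square_integrable M g"
  shows "integrable M (\<lambda>x. f x * g x)"
proof (rule Bochner_Integration.integrable_bound)
  show "integrable M (\<lambda>x. (f x)\<^sup>2 + (g x)\<^sup>2)" using f g unfolding square_integrable_def by auto
  show "(\<lambda>x. f x * g x) \<in> borel_measurable M"
    using square_integrable_measurable[OF f] square_integrable_measurable[OF g]
    by (rule borel_measurable_times)
  have "norm (f x * g x) \<le> norm ((f x)\<^sup>2 + (g x)\<^sup>2)" for x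
  proof -
    have "2 * \<bar>f x\<bar> * \<bar>g x\<bar> \<le> (f x)\<^sup>2 + (g x)\<^sup>2"
      using sum_squares_bound[of "\<bar>f x\<bar>" "\<bar>g x\<bar>"] by simp
    moreover have "0 \<le> \<bar>f x\<bar> * \<bar>g x\<bar>" by simp
    ultimately have "\<bar>f x\<bar> * \<bar>g x\<bar> \<le> (f x)\<^sup>2 + (g x)\<^sup>2" by linarith
    then show ?thesis by (simp add: abs_mult)
  qed
  then show "AE x in M. norm (f x * g x) \<le> norm ((f x)\<^sup>2 + (g x)\<^sup>2)" by simp
qed

lemma square_integrable_add:
  assumes f: "square_integrable M f" and g: "square_integrable M g"
  shows "square_integrable M (\<lambda>x. f x + g x)"
  unfolding square_integrable_def
proof
  show "(\<lambda>x. f x + g x) \<in> borel_measurable M"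
    using square_integrable_measurable[OF f] square_integrable_measurable[OF g]
    by (rule borel_measurable_add)
  have "integrable M (\<lambda>x. (f x)\<^sup>2 + (g x)\<^sup>2 + 2 * (f x * g x))"
    using square_integrable_integrable_square[OF f] square_integrable_integrable_square[OF g]
      integrable_mult_square_integrable[OF f g] by simp
  then show "integrable M (\<lambda>x. (f x + g x)\<^sup>2)"
    by (simp add: power2_sum mult.assoc)
qed

lemma square_integrable_cmult: "square_integrable M f \<Longrightarrow> square_integrable M (\<lambda>x. c * f x)"
  unfolding square_integrable_def by (simp add: power_mult_distrib borel_measurable_times)

lemma square_integrable_diff:
  "square_integrable M f \<Longrightarrow> square_integrable M g \<Longrightarrow> square_integrable M (\<lambda>x. f x - g x)"
  using square_integrable_add[of M f "\<lambda>x. -1 * g x"] square_integrable_cmult[of M g "-1"] by simp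

lemma square_integrable_mult_bounded:
  assumes f: "square_integrable M f" and h: "h \<in> borel_measurable M"
    and B: "\<And>x. x \<in> space M \<Longrightarrow> \<bar>h x\<bar> \<le> B"
  shows "square_integrable M (\<lambda>x. f x * h x)"
  unfolding square_integrable_def
proof
  show fh: "(\<lambda>x. f x * h x) \<in> borel_measurable M"
    using square_integrable_measurable[OF f] h by (rule borel_measurable_times)
  show "integrable M (\<lambda>x. (f x * h x)\<^sup>2)"
  proof (rule Bochner_Integration.integrable_bound)
    show "integrable M (\<lambda>x. B\<^sup>2 * (f x)\<^sup>2)" using f unfolding square_integrable_def by auto
    show "(\<lambda>x. (f x * h x)\<^sup>2) \<in> borel_measurable M"
      using fh by (rule borel_measurable_power)
    have "(f x * h x)\<^sup>2 \<le> B\<^sup>2 * (f x)\<^sup>2" if "x \<in> space M" for x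
    proof -
      have "(h x)\<^sup>2 \<le> B\<^sup>2" using power_mono[OF B[OF that] abs_ge_zero, of 2] by simp
      from mult_right_mono[OF this, of "(f x)\<^sup>2"] show ?thesis
        by (simp add: power_mult_distrib mult.commute)
    qed
    then show "AE x in M. norm ((f x * h x)\<^sup>2) \<le> norm (B\<^sup>2 * (f x)\<^sup>2)"
      by (intro AE_I2) simp
  qed
qed

context finite_measure
begin

lemma square_integrable_const: "square_integrable M (\<lambda>x. c)"
  unfolding square_integrable_def by simp

lemma square_integrable_bounded:
  assumes "h \<in> borel_measurable M" "\<And>x. x \<in> space M \<Longrightarrow> \<bar>h x\<bar> \<le> B"
  shows "square_integrable M h"
  using square_integrable_mult_bounded[OF square_integrable_const[of 1] assms] by simp

lemma integrable_if_square_integrable: "square_integrable M f \<Longrightarrow> integrable M f"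
  unfolding square_integrable_def by (blast intro: square_integrable_imp_integrable)

lemma square_integrable_sum:
  "finite I \<Longrightarrow> (\<And>i. i \<in> I \<Longrightarrow> square_integrable M (f i)) \<Longrightarrow> square_integrable M (\<lambda>x. \<Sum>i\<in>I. f i x)"
proof (induction I rule: finite_induct)
  case (insert i I)
  then show ?case using square_integrable_add[of M "f i" "\<lambda>x. \<Sum>i\<in>I. f i x"] by simp
qed (simp add: square_integrable_const)

end

lemma integral_square_weighted_sum:
  assumes "finite I" and f: "\<And>i. i \<in> I \<Longrightarrow> square_integrable M (f i)"
  shows "(\<integral>x. (\<Sum>i\<in>I. w i * f i x)\<^sup>2 \<partial>M) = (\<Sum>i\<in>I. \<Sum>j\<in>I. w i * w j * (\<integral>x. f i x * f j x \<partial>M))"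
proof -
  have int: "integrable M (\<lambda>x. f i x * f j x)" if "i \<in> I" "j \<in> I" for i j
    using f that by (blast intro: integrable_mult_square_integrable)
  have "(\<lambda>x. (\<Sum>i\<in>I. w i * f i x)\<^sup>2) = (\<lambda>x. \<Sum>i\<in>I. \<Sum>j\<in>I. w i * w j * (f i x * f j x))"
    by (simp add: fun_eq_iff power2_eq_square sum_product ac_simps)
  then show ?thesis using int by (simp add: Bochner_Integration.integral_sum)
qed

context prob_space
begin

lemma
  fixes f :: "'a \<Rightarrow> real"
  assumes "square_integrable M f"
  shows square_integrable_centred: "square_integrable M (\<lambda>x. f x - expectation f)"
    and expectation_centred: "expectation (\<lambda>x. f x - expectation f) = 0"
  using assms integrable_if_square_integrable[OF assms]
  by (simp_all add: square_integrable_diff square_integrable_const prob_space)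

end

lemma (in prob_space) cov_eq_integral_centered:
  assumes f: "square_integrable M f" and g: "square_integrable M g"
  shows "cov M f g = (\<integral>x. (f x - expectation f) * (g x - expectation g) \<partial>M)"
proof -
  have "integrable M f" "integrable M g" "integrable M (\<lambda>x. f x * g x)"
    using f g by (auto intro: integrable_if_square_integrable integrable_mult_square_integrable)
  then show ?thesis
    unfolding cov_def by (simp add: algebra_simps prob_space)
qed

section \<open>I.i.d. samples\<close>

definition sample_mean :: "('u \<Rightarrow> real) \<Rightarrow> nat \<Rightarrow> (nat \<Rightarrow> 'u) \<Rightarrow> real" where
  "sample_mean f n \<omega> = (\<Sum>i<n. f (\<omega> i)) / real n"

lemma sqrt_times_sample_mean:
  "sqrt (real n) * sample_mean f n \<omega> = (\<Sum>i<n. f (\<omega> i)) / sqrt (real n)"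
  unfolding sample_mean_def
  by (metis divide_divide_eq_right real_div_sqrt of_nat_0_le_iff times_divide_eq_right mult.commute)

lemma sample_mean_sum:
  "sample_mean (\<lambda>u. \<Sum>l\<in>I. w l * \<psi> l u) n \<omega> = (\<Sum>l\<in>I. w l * sample_mean (\<psi> l) n \<omega>)"
proof -
  have "(\<Sum>i<n. \<Sum>l\<in>I. w l * \<psi> l (\<omega> i)) = (\<Sum>l\<in>I. w l * (\<Sum>i<n. \<psi> l (\<omega> i)))"
    by (subst sum.swap) (simp add: sum_distrib_left)
  then show ?thesis
    unfolding sample_mean_def by (simp only: sum_divide_distrib[of _ I] times_divide_eq_right)
qed

locale iid_sample =
  fixes P :: "'u measure"
  assumes prob_space_P: "prob_space P"
begin

abbreviation sample_space :: "(nat \<Rightarrow> 'u) measure" where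
  "sample_space \<equiv> PiM UNIV (\<lambda>_. P)"

sublocale P: prob_space P by (fact prob_space_P)

sublocale S: prob_space sample_space by (intro prob_space_PiM prob_space_P)

lemma distr_coordinate: "distr sample_space P (\<lambda>\<omega>. \<omega> i) = P"
  using distr_PiM_component[of UNIV "\<lambda>_. P" i] prob_space_P by simp

lemma
  fixes g :: "'u \<Rightarrow> real"
  assumes g: "g \<in> borel_measurable P"
  shows integral_coordinate: "(\<integral>\<omega>. g (\<omega> i) \<partial>sample_space) = (\<integral>u. g u \<partial>P)"
    and integrable_coordinate_iff: "integrable sample_space (\<lambda>\<omega>. g (\<omega> i)) \<longleftrightarrow> integrable P g"
proof -
  have i: "(\<lambda>\<omega>. \<omega> i) \<in> measurable sample_space P" by simp
  show "(\<integral>\<omega>. g (\<omega> i) \<partial>sample_space) = (\<integral>u. g u \<partial>P)"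
    using integral_distr[OF i g] by (simp add: distr_coordinate)
  show "integrable sample_space (\<lambda>\<omega>. g (\<omega> i)) \<longleftrightarrow> integrable P g"
    using integrable_distr_eq[OF i g] by (simp add: distr_coordinate)
qed

lemma indep_coordinates: "S.indep_vars (\<lambda>_. P) (\<lambda>i \<omega>. \<omega> i) UNIV"
proof -
  have rv: "\<And>i. S.random_variable P (\<lambda>\<omega>. \<omega> i)" by simp
  have e1: "(\<lambda>\<omega>. \<lambda>i\<in>UNIV. \<omega> i) = (\<lambda>\<omega>. \<omega>)" by (simp add: fun_eq_iff)
  have e2: "PiM UNIV (\<lambda>i. distr sample_space P (\<lambda>\<omega>. \<omega> i)) = sample_space"
    by (rule PiM_cong) (simp_all add: distr_coordinate)
  have "distr sample_space sample_space (\<lambda>\<omega>. \<lambda>i\<in>UNIV. \<omega> i)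
      = PiM UNIV (\<lambda>i. distr sample_space P (\<lambda>\<omega>. \<omega> i))"
    unfolding e1 e2 by (rule distr_id2) simp
  then show ?thesis by (subst S.indep_vars_iff_distr_eq_PiM[OF _ rv]) simp_all
qed

lemma indep_var_coordinates:
  assumes f: "f \<in> borel_measurable P" and "i \<noteq> j"
  shows "S.indep_var borel (\<lambda>\<omega>. f (\<omega> i)) borel (\<lambda>\<omega>. f (\<omega> j))"
proof -
  have "S.indep_vars (\<lambda>_. borel) (\<lambda>k \<omega>. f (\<omega> k)) UNIV"
    using f by (intro S.indep_vars_compose2[OF indep_coordinates]) simp
  then have "S.indep_var (PiM {i} (\<lambda>_. borel)) (\<lambda>\<omega>. restrict (\<lambda>k. f (\<omega> k)) {i})
      (PiM {j} (\<lambda>_. borel)) (\<lambda>\<omega>. restrict (\<lambda>k. f (\<omega> k)) {j})"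
    using \<open>i \<noteq> j\<close> by (intro S.indep_var_restrict) auto
  then have "S.indep_var borel ((\<lambda>x. x i) \<circ> (\<lambda>\<omega>. restrict (\<lambda>k. f (\<omega> k)) {i}))
      borel ((\<lambda>x. x j) \<circ> (\<lambda>\<omega>. restrict (\<lambda>k. f (\<omega> k)) {j}))"
    by (rule S.indep_var_compose) measurable
  then show ?thesis by (simp add: comp_def)
qed

lemma
  assumes f: "square_integrable P f" and f0: "P.expectation f = 0"
  shows integrable_sum_coordinates_squared:
      "integrable sample_space (\<lambda>\<omega>. (\<Sum>i<n. f (\<omega> i))\<^sup>2)"
    and integral_sum_coordinates_squared:
      "(\<integral>\<omega>. (\<Sum>i<n. f (\<omega> i))\<^sup>2 \<partial>sample_space) = real n * P.expectation (\<lambda>u. (f u)\<^sup>2)"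
proof -
  have fm [measurable]: "f \<in> borel_measurable P" by (rule square_integrable_measurable[OF f])
  have f2m: "(\<lambda>u. (f u)\<^sup>2) \<in> borel_measurable P" by measurable
  have int1: "integrable sample_space (\<lambda>\<omega>. f (\<omega> i))" for i
    using f by (simp add: integrable_coordinate_iff P.integrable_if_square_integrable)
  have "integrable sample_space (\<lambda>\<omega>. f (\<omega> i) * f (\<omega> j))
      \<and> (\<integral>\<omega>. f (\<omega> i) * f (\<omega> j) \<partial>sample_space) = (if i = j then P.expectation (\<lambda>u. (f u)\<^sup>2) else 0)"
    for i j
  proof (cases "i = j")
    case True
    then show ?thesis
      using square_integrable_integrable_square[OF f]
      by (simp add: integral_coordinate[OF f2m] integrable_coordinate_iff[OF f2m]
          power2_eq_square[symmetric])
  next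
    case False
    note indep = indep_var_coordinates[OF fm False]
    show ?thesis
      using S.indep_var_integrable[OF indep int1 int1]
        S.indep_var_lebesgue_integral[OF indep int1 int1]
        False f0 by (simp add: integral_coordinate[OF fm])
  qed
  then have int2: "\<And>i j. integrable sample_space (\<lambda>\<omega>. f (\<omega> i) * f (\<omega> j))"
    and val: "\<And>i j. (\<integral>\<omega>. f (\<omega> i) * f (\<omega> j) \<partial>sample_space)
                  = (if i = j then P.expectation (\<lambda>u. (f u)\<^sup>2) else 0)"
    by blast+
  have sq: "(\<Sum>i<n. f (\<omega> i))\<^sup>2 = (\<Sum>i<n. \<Sum>j<n. f (\<omega> i) * f (\<omega> j))" for \<omega>
    by (simp add: power2_eq_square sum_product)
  show "integrable sample_space (\<lambda>\<omega>. (\<Sum>i<n. f (\<omega> i))\<^sup>2)"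
    unfolding sq by (intro Bochner_Integration.integrable_sum int2)
  show "(\<integral>\<omega>. (\<Sum>i<n. f (\<omega> i))\<^sup>2 \<partial>sample_space) = real n * P.expectation (\<lambda>u. (f u)\<^sup>2)"
    unfolding sq by (simp add: Bochner_Integration.integral_sum int2 val)
qed

lemma prob_abs_sum_coordinates_ge:
  assumes f: "square_integrable P f" and f0: "P.expectation f = 0" and t: "t > 0"
  shows "S.prob {\<omega> \<in> space sample_space. t \<le> \<bar>\<Sum>i<n. f (\<omega> i)\<bar>}
           \<le> real n * P.expectation (\<lambda>u. (f u)\<^sup>2) / t\<^sup>2"
proof -
  have [measurable]: "f \<in> borel_measurable P" by (rule square_integrable_measurable[OF f])
  have int1: "integrable sample_space (\<lambda>\<omega>. f (\<omega> i))" for i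
    using f by (simp add: integrable_coordinate_iff P.integrable_if_square_integrable)
  have "S.expectation (\<lambda>\<omega>. \<Sum>i<n. f (\<omega> i)) = 0"
    using f0 int1 by (simp add: integral_coordinate[OF \<open>f \<in> borel_measurable P\<close>])
  moreover have "S.prob {\<omega> \<in> space sample_space.
        t \<le> \<bar>(\<Sum>i<n. f (\<omega> i)) - S.expectation (\<lambda>\<omega>. \<Sum>i<n. f (\<omega> i))\<bar>}
      \<le> S.variance (\<lambda>\<omega>. \<Sum>i<n. f (\<omega> i)) / t\<^sup>2"
    using integrable_sum_coordinates_squared[OF f f0] t by (intro S.Chebyshev_inequality) simp_all
  ultimately show ?thesis by (simp add: integral_sum_coordinates_squared[OF f f0])
qed

lemma outer_prob_le_sqrt_sample_mean:
  assumes f: "square_integrable P f" and f0: "P.expectation f = 0"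
    and K: "K > 0" and \<delta>: "P.expectation (\<lambda>u. (f u)\<^sup>2) \<le> \<delta> * K\<^sup>2"
  shows "outer_prob_le sample_space
           {\<omega> \<in> space sample_space. K < \<bar>sqrt (real n) * sample_mean f n \<omega>\<bar>} \<delta>"
proof (cases "n = 0")
  case True
  have "0 \<le> P.expectation (\<lambda>u. (f u)\<^sup>2)" by (rule integral_nonneg_AE) simp
  then have "0 \<le> \<delta> * K\<^sup>2" using \<delta> by linarith
  then show ?thesis
    using K True by (intro outer_prob_le_measure) (simp_all add: sample_mean_def zero_le_mult_iff)
next
  case False
  have [measurable]: "f \<in> borel_measurable P" by (rule square_integrable_measurable[OF f])
  have "{\<omega> \<in> space sample_space. K < \<bar>sqrt (real n) * sample_mean f n \<omega>\<bar>}
      \<subseteq> {\<omega> \<in> space sample_space. K * sqrt (real n) \<le> \<bar>\<Sum>i<n. f (\<omega> i)\<bar>}"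
  proof safe
    fix \<omega> assume "K < \<bar>sqrt (real n) * sample_mean f n \<omega>\<bar>"
    then have "K < \<bar>\<Sum>i<n. f (\<omega> i)\<bar> / sqrt (real n)"
      by (simp add: sqrt_times_sample_mean abs_div)
    then show "K * sqrt (real n) \<le> \<bar>\<Sum>i<n. f (\<omega> i)\<bar>"
      using False by (simp add: pos_less_divide_eq)
  qed
  moreover have "outer_prob_le sample_space
      {\<omega> \<in> space sample_space. K * sqrt (real n) \<le> \<bar>\<Sum>i<n. f (\<omega> i)\<bar>} \<delta>"
  proof (rule outer_prob_le_measure)
    show "{\<omega> \<in> space sample_space. K * sqrt (real n) \<le> \<bar>\<Sum>i<n. f (\<omega> i)\<bar>} \<in> sets sample_space"
      by measurable
    have "S.prob {\<omega> \<in> space sample_space. K * sqrt (real n) \<le> \<bar>\<Sum>i<n. f (\<omega> i)\<bar>}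
        \<le> P.expectation (\<lambda>u. (f u)\<^sup>2) / K\<^sup>2"
      using prob_abs_sum_coordinates_ge[OF f f0, of "K * sqrt (real n)" n] K False
      by (simp add: power_mult_distrib)
    also have "\<dots> \<le> \<delta>" using \<delta> K by (simp add: pos_divide_le_eq)
    finally show "S.prob {\<omega> \<in> space sample_space. K * sqrt (real n) \<le> \<bar>\<Sum>i<n. f (\<omega> i)\<bar>} \<le> \<delta>" .
  qed
  ultimately show ?thesis by (rule outer_prob_le_mono[rotated])
qed

end

context iid_sample
begin

lemma bounded_in_prob_sqrt_sample_mean:
  assumes f: "square_integrable P f" and f0: "P.expectation f = 0"
  shows "bounded_in_prob sample_space (\<lambda>n \<omega>. sqrt (real n) * sample_mean f n \<omega>)"
  unfolding bounded_in_prob_def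
proof (intro allI impI)
  fix \<delta> :: real assume "\<delta> > 0"
  define s where "s = P.expectation (\<lambda>u. (f u)\<^sup>2)"
  define K where "K = s / \<delta> + 1"
  have "0 \<le> s" unfolding s_def by (rule integral_nonneg_AE) simp
  then have "1 \<le> K" using \<open>\<delta> > 0\<close> unfolding K_def by simp
  then have "K \<le> K\<^sup>2" by (simp add: power2_eq_square)
  have "s \<le> \<delta> * K" using \<open>\<delta> > 0\<close> \<open>0 \<le> s\<close> by (simp add: K_def field_simps)
  also have "\<dots> \<le> \<delta> * K\<^sup>2" using \<open>\<delta> > 0\<close> \<open>K \<le> K\<^sup>2\<close> by simp
  finally have "s \<le> \<delta> * K\<^sup>2" .
  then have "\<forall>n. outer_prob_le sample_space
      {\<omega> \<in> space sample_space. K < \<bar>sqrt (real n) * sample_mean f n \<omega>\<bar>} \<delta>"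
    using \<open>1 \<le> K\<close> by (auto intro!: outer_prob_le_sqrt_sample_mean[OF f f0] simp: s_def)
  then show "\<exists>K. eventually (\<lambda>n. outer_prob_le sample_space
      {\<omega> \<in> space sample_space. K < \<bar>sqrt (real n) * sample_mean f n \<omega>\<bar>} \<delta>) sequentially"
    by (intro exI always_eventually)
qed

lemma vanishes_in_prob_sqrt_sample_mean:
  assumes f: "square_integrable P f" and f0: "P.expectation f = 0"
    and v: "P.expectation (\<lambda>u. (f u)\<^sup>2) = 0"
  shows "vanishes_in_prob sample_space (\<lambda>n \<omega>. sqrt (real n) * sample_mean f n \<omega>)"
  unfolding vanishes_in_prob_def asymp_null_def
proof (intro allI impI always_eventually)
  fix e \<delta> :: real and n assume "e > 0" "\<delta> > 0"
  then show "outer_prob_le sample_space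
      {\<omega> \<in> space sample_space. e < \<bar>sqrt (real n) * sample_mean f n \<omega>\<bar>} \<delta>"
    using v by (intro outer_prob_le_sqrt_sample_mean[OF f f0]) simp_all
qed

lemma vanishes_in_prob_sample_mean:
  assumes f: "square_integrable P f"
  shows "vanishes_in_prob sample_space (\<lambda>n \<omega>. sample_mean f n \<omega> - P.expectation f)"
proof -
  define g where "g = (\<lambda>u. f u - P.expectation f)"
  note g = P.square_integrable_centred[OF f, folded g_def]
    P.expectation_centred[OF f, folded g_def]
  then have "vanishes_in_prob sample_space (sample_mean g)"
    by (intro vanishes_in_prob_if_sqrt_scaled_bounded bounded_in_prob_sqrt_sample_mean g)
  moreover have "eventually (\<lambda>n. \<forall>\<omega>\<in>space sample_space.
      sample_mean f n \<omega> - P.expectation f = sample_mean g n \<omega>) sequentially"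
    using eventually_gt_at_top[of 0]
    by eventually_elim (simp add: sample_mean_def g_def sum_subtractf diff_divide_distrib)
  ultimately show ?thesis by (rule vanishes_in_prob_eventually_cong)
qed

lemma weak_conv_sqrt_sample_mean:
  assumes f: "square_integrable P f" and f0: "P.expectation f = 0"
    and v: "P.expectation (\<lambda>u. (f u)\<^sup>2) > 0"
  shows "weak_conv_m (\<lambda>n. distr sample_space borel (\<lambda>\<omega>. sqrt (real n) * sample_mean f n \<omega>))
           (normal_measure (P.expectation (\<lambda>u. (f u)\<^sup>2)))"
proof -
  define \<sigma> where "\<sigma> = sqrt (P.expectation (\<lambda>u. (f u)\<^sup>2))"
  have \<sigma>: "\<sigma> > 0" "\<sigma>\<^sup>2 = P.expectation (\<lambda>u. (f u)\<^sup>2)" using v by (auto simp: \<sigma>_def)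
  have fm [measurable]: "f \<in> borel_measurable P" by (rule square_integrable_measurable[OF f])
  have f2m: "(\<lambda>u. (f u)\<^sup>2) \<in> borel_measurable P" by measurable
  define X :: "nat \<Rightarrow> (nat \<Rightarrow> 'u) \<Rightarrow> real" where "X i \<omega> = f (\<omega> i)" for i \<omega>
  have indep: "S.indep_vars (\<lambda>i. borel) X UNIV"
    unfolding X_def by (rule S.indep_vars_compose2[OF indep_coordinates]) simp
  have mean: "S.expectation (X n) = 0" for n
    unfolding X_def using f0 by (simp add: integral_coordinate[OF fm])
  have square: "integrable sample_space (\<lambda>\<omega>. (X n \<omega>)\<^sup>2)" for n
    unfolding X_def using square_integrable_integrable_square[OF f]
    by (simp add: integrable_coordinate_iff[OF f2m])
  have var: "S.variance (X n) = \<sigma>\<^sup>2" for n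
    using mean[of n] unfolding \<sigma>(2) X_def by (simp add: integral_coordinate[OF f2m])
  have dist: "distr sample_space borel (X n) = distr P borel f" for n
  proof -
    have "distr (distr sample_space P (\<lambda>\<omega>. \<omega> n)) borel f
        = distr sample_space borel (f \<circ> (\<lambda>\<omega>. \<omega> n))"
      by (rule distr_distr) simp_all
    then show ?thesis unfolding distr_coordinate X_def by (simp add: comp_def)
  qed
  have "weak_conv_m (\<lambda>n. distr sample_space borel (\<lambda>\<omega>. (\<Sum>i<n. X i \<omega>) / sqrt (real n * \<sigma>\<^sup>2)))
      std_normal_distribution"
    by (rule S.central_limit_theorem_zero_mean[OF indep mean \<sigma>(1) square var dist])
  then have "weak_conv_m
      (\<lambda>n. distr sample_space borel (\<lambda>\<omega>. \<sigma> * ((\<Sum>i<n. X i \<omega>) / sqrt (real n * \<sigma>\<^sup>2))))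
      (normal_measure (\<sigma>\<^sup>2))"
    by (intro weak_conv_m_scale_std_normal \<sigma>(1)) (simp_all add: X_def)
  moreover have "\<sigma> * ((\<Sum>i<n. X i \<omega>) / sqrt (real n * \<sigma>\<^sup>2)) = sqrt (real n) * sample_mean f n \<omega>"
    for n \<omega>
    using \<sigma>(1) by (simp add: X_def sqrt_times_sample_mean real_sqrt_mult)
  ultimately show ?thesis unfolding \<sigma>(2) by simp
qed

end

section \<open>Asymptotically linear estimators\<close>

definition asymptotically_linear ::
    "'u measure \<Rightarrow> (nat \<Rightarrow> (nat \<Rightarrow> 'u) \<Rightarrow> real) \<Rightarrow> real \<Rightarrow> ('u \<Rightarrow> real) \<Rightarrow> bool" where
  "asymptotically_linear P T \<theta> \<psi> \<longleftrightarrow> vanishes_in_prob (PiM UNIV (\<lambda>_. P))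
     (\<lambda>n \<omega>. sqrt (real n) * (T n \<omega> - \<theta>) - sqrt (real n) * sample_mean \<psi> n \<omega>)"

lemma asymptotically_linear_sum:
  assumes "finite I" and "\<And>l. l \<in> I \<Longrightarrow> asymptotically_linear P (T l) (\<theta> l) (\<psi> l)"
  shows "asymptotically_linear P (\<lambda>n \<omega>. \<Sum>l\<in>I. w l * T l n \<omega>) (\<Sum>l\<in>I. w l * \<theta> l)
           (\<lambda>u. \<Sum>l\<in>I. w l * \<psi> l u)"
proof -
  have "sqrt (real n) * ((\<Sum>l\<in>I. w l * T l n \<omega>) - (\<Sum>l\<in>I. w l * \<theta> l))
        - sqrt (real n) * sample_mean (\<lambda>u. \<Sum>l\<in>I. w l * \<psi> l u) n \<omega>
      = (\<Sum>l\<in>I. w l * (sqrt (real n) * (T l n \<omega> - \<theta> l) - sqrt (real n) * sample_mean (\<psi> l) n \<omega>))"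
    for n \<omega>
    by (simp add: sample_mean_sum sum_subtractf sum_distrib_left sum.distrib algebra_simps)
  then show ?thesis
    unfolding asymptotically_linear_def
    by (simp only:) (rule vanishes_in_prob_sum, use assms in \<open>auto simp: asymptotically_linear_def\<close>)
qed

context iid_sample
begin

lemma asymptotically_linear_imp_conv_in_prob:
  assumes T: "asymptotically_linear P T \<theta> \<psi>"
    and \<psi>: "square_integrable P \<psi>" "P.expectation \<psi> = 0"
  shows "conv_in_prob sample_space T \<theta>"
proof -
  let ?R = "\<lambda>n \<omega>. sqrt (real n) * (T n \<omega> - \<theta>) - sqrt (real n) * sample_mean \<psi> n \<omega>"
  have "vanishes_in_prob sample_space (\<lambda>n \<omega>. ?R n \<omega> - 0)"
    using T by (simp add: asymptotically_linear_def)
  then have "bounded_in_prob sample_space (\<lambda>n \<omega>. ?R n \<omega> + sqrt (real n) * sample_mean \<psi> n \<omega>)"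
    by (intro bounded_in_prob_add bounded_in_prob_sqrt_sample_mean[OF \<psi>]
        vanishes_in_prob_imp_bounded_in_prob)
  then have "bounded_in_prob sample_space (\<lambda>n \<omega>. sqrt (real n) * (T n \<omega> - \<theta>))" by simp
  then have "vanishes_in_prob sample_space (\<lambda>n \<omega>. T n \<omega> - \<theta>)"
    by (rule vanishes_in_prob_if_sqrt_scaled_bounded)
  then show ?thesis by (rule S.conv_in_prob_if_vanishes)
qed

lemma asymptotically_linear_imp_weak_conv_m:
  assumes T: "asymptotically_linear P T \<theta> \<psi>"
    and \<psi>: "square_integrable P \<psi>" "P.expectation \<psi> = 0"
    and Tm: "\<And>n. T n \<in> borel_measurable sample_space"
  shows "weak_conv_m (\<lambda>n. distr sample_space borel (\<lambda>\<omega>. sqrt (real n) * (T n \<omega> - \<theta>)))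
           (normal_measure (P.expectation (\<lambda>u. (\<psi> u)\<^sup>2)))"
proof -
  let ?v = "P.expectation (\<lambda>u. (\<psi> u)\<^sup>2)"
  have R: "vanishes_in_prob sample_space
      (\<lambda>n \<omega>. sqrt (real n) * (T n \<omega> - \<theta>) - sqrt (real n) * sample_mean \<psi> n \<omega>)"
    using T by (simp add: asymptotically_linear_def)
  have [measurable]: "T n \<in> borel_measurable sample_space" for n by (rule Tm)
  have [measurable]: "\<psi> \<in> borel_measurable P" by (rule square_integrable_measurable[OF \<psi>(1)])
  have Ym: "(\<lambda>\<omega>. sqrt (real n) * (T n \<omega> - \<theta>)) \<in> borel_measurable sample_space" for n
    by measurable
  show ?thesis
  proof (cases "?v = 0")
    case True
    have "vanishes_in_prob sample_space (\<lambda>n \<omega>.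
        (sqrt (real n) * (T n \<omega> - \<theta>) - sqrt (real n) * sample_mean \<psi> n \<omega>)
        + sqrt (real n) * sample_mean \<psi> n \<omega>)"
      by (rule vanishes_in_prob_add[OF R vanishes_in_prob_sqrt_sample_mean[OF \<psi> True]])
    then have "weak_conv_m (\<lambda>n. distr sample_space borel (\<lambda>\<omega>. sqrt (real n) * (T n \<omega> - \<theta>)))
        (return borel 0)"
      by (intro S.weak_conv_m_return_zero Ym) simp
    then show ?thesis using True by (simp add: normal_measure_def)
  next
    case False
    have "0 \<le> ?v" by (rule integral_nonneg_AE) simp
    with False have v: "?v > 0" by linarith
    have "isCont (cdf (normal_measure ?v)) x" for x
      using isCont_cdf_normal_measure[of "sqrt ?v" x] v by simp
    moreover have "(\<lambda>\<omega>. sqrt (real n) * sample_mean \<psi> n \<omega>) \<in> borel_measurable sample_space" for n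
      unfolding sample_mean_def by measurable
    ultimately show ?thesis
      by (intro S.slutsky[OF _ Ym _ weak_conv_sqrt_sample_mean[OF \<psi> v] R])
  qed
qed

end

section \<open>Ratios of sample covariances\<close>

definition iv_estimate ::
    "('u \<Rightarrow> real) \<Rightarrow> ('u \<Rightarrow> real) \<Rightarrow> ('u \<Rightarrow> real) \<Rightarrow> nat \<Rightarrow> (nat \<Rightarrow> 'u) \<Rightarrow> real" where
  "iv_estimate Y D Z n \<omega> =
     samp_cov n (\<lambda>i. Y (\<omega> i)) (\<lambda>i. Z (\<omega> i)) / samp_cov n (\<lambda>i. D (\<omega> i)) (\<lambda>i. Z (\<omega> i))"

definition iv_slope :: "'u measure \<Rightarrow> ('u \<Rightarrow> real) \<Rightarrow> ('u \<Rightarrow> real) \<Rightarrow> ('u \<Rightarrow> real) \<Rightarrow> real" where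
  "iv_slope P Y D Z = cov P Y Z / cov P D Z"

definition iv_residual ::
    "'u measure \<Rightarrow> ('u \<Rightarrow> real) \<Rightarrow> ('u \<Rightarrow> real) \<Rightarrow> ('u \<Rightarrow> real) \<Rightarrow> 'u \<Rightarrow> real" where
  "iv_residual P Y D Z u = Y u - (\<integral>v. Y v \<partial>P) - iv_slope P Y D Z * (D u - (\<integral>v. D v \<partial>P))"

definition iv_influence ::
    "'u measure \<Rightarrow> ('u \<Rightarrow> real) \<Rightarrow> ('u \<Rightarrow> real) \<Rightarrow> ('u \<Rightarrow> real) \<Rightarrow> 'u \<Rightarrow> real" where
  "iv_influence P Y D Z u = iv_residual P Y D Z u * (Z u - (\<integral>v. Z v \<partial>P)) / cov P D Z"

lemma samp_cov_eq_sample_means: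
  "samp_cov n (\<lambda>i. X (\<omega> i)) (\<lambda>i. Z (\<omega> i))
     = sample_mean (\<lambda>u. (X u - a) * (Z u - b)) n \<omega>
       - sample_mean (\<lambda>u. X u - a) n \<omega> * sample_mean (\<lambda>u. Z u - b) n \<omega>"
proof (cases "n = 0")
  case False
  have s1: "(\<Sum>i<n. (X (\<omega> i) - a) * (Z (\<omega> i) - b))
      = (\<Sum>i<n. X (\<omega> i) * Z (\<omega> i)) - b * (\<Sum>i<n. X (\<omega> i)) - a * (\<Sum>i<n. Z (\<omega> i)) + real n * a * b"
    by (simp add: algebra_simps sum.distrib sum_subtractf sum_distrib_left)
  have s2: "(\<Sum>i<n. X (\<omega> i) - a) = (\<Sum>i<n. X (\<omega> i)) - real n * a"
    and s3: "(\<Sum>i<n. Z (\<omega> i) - b) = (\<Sum>i<n. Z (\<omega> i)) - real n * b"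
    by (simp_all add: sum_subtractf)
  show ?thesis
    using False unfolding samp_cov_def sample_mean_def s1 s2 s3
    by (simp add: field_simps power2_eq_square)
qed (simp add: samp_cov_def sample_mean_def)

lemma samp_cov_sub_slope:
  "samp_cov n (\<lambda>i. Y (\<omega> i)) (\<lambda>i. Z (\<omega> i)) - W * samp_cov n (\<lambda>i. D (\<omega> i)) (\<lambda>i. Z (\<omega> i))
     = sample_mean (\<lambda>u. (Y u - a - W * (D u - b)) * (Z u - c)) n \<omega>
       - sample_mean (\<lambda>u. Y u - a - W * (D u - b)) n \<omega> * sample_mean (\<lambda>u. Z u - c) n \<omega>"
proof -
  have "samp_cov n (\<lambda>i. Y (\<omega> i)) (\<lambda>i. Z (\<omega> i)) - W * samp_cov n (\<lambda>i. D (\<omega> i)) (\<lambda>i. Z (\<omega> i))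
      = samp_cov n (\<lambda>i. Y (\<omega> i) - W * D (\<omega> i)) (\<lambda>i. Z (\<omega> i))"
    unfolding samp_cov_def
    by (simp add: sum_subtractf sum_distrib_left[symmetric] algebra_simps diff_divide_distrib)
  moreover have "Y u - W * D u - (a - W * b) = Y u - a - W * (D u - b)" for u
    by (simp add: algebra_simps)
  ultimately show ?thesis
    using samp_cov_eq_sample_means[where X="\<lambda>u. Y u - W * D u" and a="a - W * b" and b=c]
    by (simp only:)
qed

lemma ratio_expansion:
  fixes cy cd W \<gamma> t a b m :: real
  assumes "cd \<noteq> 0" and "cy - W * cd = a - b * m"
  shows "t * (cy / cd - W) - t * (a / \<gamma>)
           = t * a * (inverse cd - inverse \<gamma>) - inverse cd * (t * b * m)"
proof -
  have "cy / cd - W = (a - b * m) * inverse cd"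
    using assms by (simp add: field_simps)
  then show ?thesis by (simp only:) (simp add: divide_inverse algebra_simps)
qed

lemma iv_estimate_expansion:
  fixes P :: "'u measure" and Y D Z :: "'u \<Rightarrow> real" and n :: nat and \<omega> :: "nat \<Rightarrow> 'u"
  defines "CD \<equiv> samp_cov n (\<lambda>i. D (\<omega> i)) (\<lambda>i. Z (\<omega> i))"
    and "\<epsilon> \<equiv> iv_residual P Y D Z" and "\<zeta> \<equiv> \<lambda>u. Z u - (\<integral>v. Z v \<partial>P)"
  assumes "CD \<noteq> 0"
  shows "sqrt (real n) * (iv_estimate Y D Z n \<omega> - iv_slope P Y D Z)
           - sqrt (real n) * sample_mean (iv_influence P Y D Z) n \<omega>
         = sqrt (real n) * sample_mean (\<lambda>u. \<epsilon> u * \<zeta> u) n \<omega> * (inverse CD - inverse (cov P D Z))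
           - inverse CD * (sqrt (real n) * sample_mean \<epsilon> n \<omega> * sample_mean \<zeta> n \<omega>)"
proof -
  have "sample_mean (iv_influence P Y D Z) n \<omega> = sample_mean (\<lambda>u. \<epsilon> u * \<zeta> u) n \<omega> / cov P D Z"
    unfolding sample_mean_def iv_influence_def \<epsilon>_def \<zeta>_def
    by (simp only: sum_divide_distrib[symmetric]) (simp add: divide_inverse ac_simps)
  then show ?thesis
    unfolding iv_estimate_def CD_def[symmetric]
    by (simp only:) (rule ratio_expansion[OF \<open>CD \<noteq> 0\<close>],
        simp add: CD_def samp_cov_sub_slope \<epsilon>_def \<zeta>_def iv_residual_def[abs_def])
qed

context prob_space
begin

lemma square_integrable_iv_residual:
  "square_integrable M Y \<Longrightarrow> square_integrable M D \<Longrightarrow> square_integrable M (iv_residual M Y D Z)"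
  unfolding iv_residual_def[abs_def]
  by (intro square_integrable_diff square_integrable_cmult square_integrable_const)

lemma expectation_iv_residual:
  "integrable M Y \<Longrightarrow> integrable M D \<Longrightarrow> expectation (iv_residual M Y D Z) = 0"
  unfolding iv_residual_def[abs_def] by (simp add: prob_space)

lemma expectation_iv_residual_mult_centred:
  assumes Y: "square_integrable M Y" and D: "square_integrable M D" and Z: "square_integrable M Z"
    and \<gamma>: "cov M D Z \<noteq> 0"
  shows "expectation (\<lambda>u. iv_residual M Y D Z u * (Z u - expectation Z)) = 0"
proof -
  let ?W = "iv_slope M Y D Z"
  have "(\<lambda>u. iv_residual M Y D Z u * (Z u - expectation Z))
      = (\<lambda>u. (Y u - expectation Y) * (Z u - expectation Z)
             - ?W * ((D u - expectation D) * (Z u - expectation Z)))"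
    by (simp add: fun_eq_iff iv_residual_def algebra_simps)
  moreover have "integrable M (\<lambda>u. (X u - expectation X) * (Z u - expectation Z))"
    if "square_integrable M X" for X
    using that Z by (intro integrable_mult_square_integrable square_integrable_centred)
  ultimately have "expectation (\<lambda>u. iv_residual M Y D Z u * (Z u - expectation Z))
      = cov M Y Z - ?W * cov M D Z"
    using Y D Z by (simp add: cov_eq_integral_centered)
  then show ?thesis using \<gamma> by (simp add: iv_slope_def)
qed

lemma
  assumes Y: "square_integrable M Y" and D: "square_integrable M D"
    and Z: "Z \<in> borel_measurable M" "\<And>u. u \<in> space M \<Longrightarrow> \<bar>Z u\<bar> \<le> B"
    and \<gamma>: "cov M D Z \<noteq> 0"
  shows square_integrable_iv_influence: "square_integrable M (iv_influence M Y D Z)"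
    and expectation_iv_influence: "expectation (iv_influence M Y D Z) = 0"
proof -
  have "square_integrable M (\<lambda>u. iv_residual M Y D Z u * (Z u - expectation Z))"
  proof (rule square_integrable_mult_bounded)
    show "square_integrable M (iv_residual M Y D Z)"
      using Y D by (rule square_integrable_iv_residual)
    show "(\<lambda>u. Z u - expectation Z) \<in> borel_measurable M" using Z(1) by measurable
    show "\<bar>Z u - expectation Z\<bar> \<le> B + \<bar>expectation Z\<bar>" if "u \<in> space M" for u
      using Z(2)[OF that] by linarith
  qed
  moreover have "iv_influence M Y D Z
      = (\<lambda>u. inverse (cov M D Z) * (iv_residual M Y D Z u * (Z u - expectation Z)))"
    by (simp add: fun_eq_iff iv_influence_def divide_inverse mult.commute)
  ultimately show "square_integrable M (iv_influence M Y D Z)"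
    by (simp add: square_integrable_cmult)
  show "expectation (iv_influence M Y D Z) = 0"
    using expectation_iv_residual_mult_centred[OF Y D square_integrable_bounded[OF Z] \<gamma>]
    unfolding iv_influence_def[abs_def] by simp
qed

end

context iid_sample
begin

lemma vanishes_in_prob_samp_cov:
  assumes X: "square_integrable P X"
    and Zm: "Z \<in> borel_measurable P" and ZB: "\<And>u. u \<in> space P \<Longrightarrow> \<bar>Z u\<bar> \<le> B"
  shows "vanishes_in_prob sample_space
           (\<lambda>n \<omega>. samp_cov n (\<lambda>i. X (\<omega> i)) (\<lambda>i. Z (\<omega> i)) - cov P X Z)"
proof -
  define \<xi> where "\<xi> = (\<lambda>u. X u - P.expectation X)"
  define \<zeta> where "\<zeta> = (\<lambda>u. Z u - P.expectation Z)"
  have Z: "square_integrable P Z" by (rule P.square_integrable_bounded[OF Zm ZB])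
  note \<xi> = P.square_integrable_centred[OF X, folded \<xi>_def]
    P.expectation_centred[OF X, folded \<xi>_def]
  note \<zeta> = P.square_integrable_centred[OF Z, folded \<zeta>_def]
    P.expectation_centred[OF Z, folded \<zeta>_def]
  have \<xi>\<zeta>: "square_integrable P (\<lambda>u. \<xi> u * \<zeta> u)"
  proof (rule square_integrable_mult_bounded)
    show "square_integrable P \<xi>" by (rule \<xi>(1))
    show "\<zeta> \<in> borel_measurable P" unfolding \<zeta>_def using Zm by measurable
    show "\<bar>\<zeta> u\<bar> \<le> B + \<bar>P.expectation Z\<bar>" if "u \<in> space P" for u
      using ZB[OF that] unfolding \<zeta>_def by linarith
  qed
  have "vanishes_in_prob sample_space (\<lambda>n \<omega>. sample_mean \<xi> n \<omega> - 0)"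
    using vanishes_in_prob_sample_mean[OF \<xi>(1)] \<xi>(2) by simp
  then have m\<xi>: "bounded_in_prob sample_space (sample_mean \<xi>)"
    by (rule vanishes_in_prob_imp_bounded_in_prob)
  have m\<zeta>: "vanishes_in_prob sample_space (sample_mean \<zeta>)"
    using vanishes_in_prob_sample_mean[OF \<zeta>(1)] \<zeta>(2) by simp
  have "vanishes_in_prob sample_space (\<lambda>n \<omega>. sample_mean (\<lambda>u. \<xi> u * \<zeta> u) n \<omega> - cov P X Z)"
    using vanishes_in_prob_sample_mean[OF \<xi>\<zeta>]
    by (simp add: \<xi>_def \<zeta>_def P.cov_eq_integral_centered[OF X Z])
  then have "vanishes_in_prob sample_space (\<lambda>n \<omega>.
      (sample_mean (\<lambda>u. \<xi> u * \<zeta> u) n \<omega> - cov P X Z) - sample_mean \<xi> n \<omega> * sample_mean \<zeta> n \<omega>)"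
    by (rule vanishes_in_prob_diff[OF _ bounded_in_prob_mult_vanishes[OF m\<xi> m\<zeta>]])
  then show ?thesis
    by (simp add: samp_cov_eq_sample_means[where a="P.expectation X" and b="P.expectation Z"]
        \<xi>_def \<zeta>_def algebra_simps)
qed

lemma asymptotically_linear_iv_estimate:
  assumes Y: "square_integrable P Y" and D: "square_integrable P D"
    and Zm: "Z \<in> borel_measurable P" and ZB: "\<And>u. u \<in> space P \<Longrightarrow> \<bar>Z u\<bar> \<le> B"
    and \<gamma>: "cov P D Z \<noteq> 0"
  shows "asymptotically_linear P (iv_estimate Y D Z) (iv_slope P Y D Z) (iv_influence P Y D Z)"
proof -
  define \<epsilon> where "\<epsilon> = iv_residual P Y D Z"
  define \<zeta> where "\<zeta> = (\<lambda>u. Z u - P.expectation Z)"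
  define CD where "CD n \<omega> = samp_cov n (\<lambda>i. D (\<omega> i)) (\<lambda>i. Z (\<omega> i))" for n \<omega>
  have Z: "square_integrable P Z" by (rule P.square_integrable_bounded[OF Zm ZB])
  have \<epsilon>: "square_integrable P \<epsilon>" "P.expectation \<epsilon> = 0" unfolding \<epsilon>_def
    by (rule P.square_integrable_iv_residual[OF Y D],
        rule P.expectation_iv_residual[OF P.integrable_if_square_integrable[OF Y]
          P.integrable_if_square_integrable[OF D]])
  have \<epsilon>\<zeta>: "square_integrable P (\<lambda>u. \<epsilon> u * \<zeta> u)" "P.expectation (\<lambda>u. \<epsilon> u * \<zeta> u) = 0"
    using P.square_integrable_iv_influence[OF Y D Zm ZB \<gamma>, THEN square_integrable_cmult,
        of "cov P D Z"]
      P.expectation_iv_residual_mult_centred[OF Y D Z \<gamma>] \<gamma>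
    by (simp_all add: iv_influence_def[abs_def] \<epsilon>_def \<zeta>_def)
  note \<zeta> = P.square_integrable_centred[OF Z, folded \<zeta>_def]
    P.expectation_centred[OF Z, folded \<zeta>_def]
  have m\<zeta>: "vanishes_in_prob sample_space (sample_mean \<zeta>)"
    using vanishes_in_prob_sample_mean[OF \<zeta>(1)] \<zeta>(2) by simp
  have CD: "vanishes_in_prob sample_space (\<lambda>n \<omega>. CD n \<omega> - cov P D Z)"
    unfolding CD_def by (rule vanishes_in_prob_samp_cov[OF D Zm ZB])
  have inv: "vanishes_in_prob sample_space (\<lambda>n \<omega>. inverse (CD n \<omega>) - inverse (cov P D Z))"
    by (rule vanishes_in_prob_inverse[OF CD \<gamma>])
  have "vanishes_in_prob sample_space (\<lambda>n \<omega>.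
      sqrt (real n) * sample_mean (\<lambda>u. \<epsilon> u * \<zeta> u) n \<omega> * (inverse (CD n \<omega>) - inverse (cov P D Z))
      - inverse (CD n \<omega>) * (sqrt (real n) * sample_mean \<epsilon> n \<omega> * sample_mean \<zeta> n \<omega>))"
  proof (rule vanishes_in_prob_diff)
    show "vanishes_in_prob sample_space (\<lambda>n \<omega>.
        sqrt (real n) * sample_mean (\<lambda>u. \<epsilon> u * \<zeta> u) n \<omega> * (inverse (CD n \<omega>) - inverse (cov P D Z)))"
      by (rule bounded_in_prob_mult_vanishes[OF bounded_in_prob_sqrt_sample_mean[OF \<epsilon>\<zeta>] inv])
    show "vanishes_in_prob sample_space (\<lambda>n \<omega>.
        inverse (CD n \<omega>) * (sqrt (real n) * sample_mean \<epsilon> n \<omega> * sample_mean \<zeta> n \<omega>))"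
      by (intro bounded_in_prob_mult_vanishes vanishes_in_prob_imp_bounded_in_prob[OF inv]
          bounded_in_prob_sqrt_sample_mean[OF \<epsilon>] m\<zeta>)
  qed
  \<comment> \<open>The estimator divides by \<open>CD\<close> and is junk (\<open>x / 0 = 0\<close>) where \<open>CD = 0\<close>;
      that event is asymptotically negligible because \<open>CD\<close> tends to \<open>cov P D Z \<noteq> 0\<close>.\<close>
  then show ?thesis
    unfolding asymptotically_linear_def
    by (rule vanishes_in_prob_cong_nonzero[OF CD \<gamma>])
      (simp add: iv_estimate_expansion CD_def \<epsilon>_def \<zeta>_def)
qed

end

section \<open>The instrumental-variable model\<close>

lemma borel_measurable_observables:
  assumes A1: "(\<lambda>u. (y0 u, y1 u, restrict (dt u) (Pow {..<L})))
               \<in> measurable P (borel \<Otimes>\<^sub>M borel \<Otimes>\<^sub>M count_space UNIV)"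
    and zz: "zz \<in> measurable P (count_space UNIV)"
    and zz_range: "\<forall>u \<in> space P. zz u \<subseteq> {..<L}"
  shows "Zl zz l \<in> borel_measurable P" and "obsD dt zz \<in> borel_measurable P"
    and "obsY y0 y1 dt zz \<in> borel_measurable P"
proof -
  have [measurable]: "y0 \<in> borel_measurable P"
    using measurable_compose[OF A1 measurable_fst] by simp
  have [measurable]: "y1 \<in> borel_measurable P"
    using measurable_compose[OF measurable_compose[OF A1 measurable_snd] measurable_fst] by simp
  define G where "G u = restrict (dt u) (Pow {..<L})" for u
  have G: "G \<in> measurable P (count_space UNIV)"
    using measurable_compose[OF measurable_compose[OF A1 measurable_snd] measurable_snd]
    by (simp add: G_def[abs_def])
  show "Zl zz l \<in> borel_measurable P"
    unfolding Zl_def[abs_def] by (rule measurable_compose[OF zz]) simp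
  have "{u \<in> space P. dt u (zz u)}
      = (\<Union>S\<in>Pow {..<L}. (zz -` {S} \<inter> space P) \<inter> (G -` {g. g S} \<inter> space P))"
    using zz_range by (auto simp: G_def)
  also have "\<dots> \<in> sets P"
    by (intro sets.finite_UN sets.Int measurable_sets[OF zz] measurable_sets[OF G]) auto
  finally have "(indicator {u \<in> space P. dt u (zz u)} :: _ \<Rightarrow> real) \<in> borel_measurable P"
    by simp
  then show [measurable]: "obsD dt zz \<in> borel_measurable P"
    by (rule measurable_cong[THEN iffD1, rotated]) (simp add: obsD_def indicator_def)
  show "obsY y0 y1 dt zz \<in> borel_measurable P"
    unfolding obsY_def[abs_def] by measurable
qed

lemma sets_Collect_instrument:
  assumes "Zl zz l \<in> borel_measurable M"
  shows "{u \<in> space M. l \<in> zz u} \<in> sets M"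
proof -
  have "{u \<in> space M. l \<in> zz u} = Zl zz l -` {1} \<inter> space M"
    by (auto simp: Zl_def split: if_splits)
  then show ?thesis using measurable_sets[OF assms, of "{1}"] by simp
qed

context prob_space
begin

lemma expectation_Zl:
  assumes "Zl zz l \<in> borel_measurable M"
  shows "expectation (Zl zz l) = p_inst M zz l"
proof -
  note sets_Collect_instrument[OF assms]
  moreover have "expectation (Zl zz l) = expectation (indicator {u \<in> space M. l \<in> zz u})"
    by (intro Bochner_Integration.integral_cong) (auto simp: Zl_def)
  ultimately show ?thesis by (simp add: p_inst_def)
qed

lemma mean_diff_eq_cov:
  assumes Z: "Zl zz l \<in> borel_measurable M" and f: "square_integrable M f"
    and p: "0 < p_inst M zz l" "p_inst M zz l < 1"
  shows "mean_diff M zz f l = cov M f (Zl zz l) / (p_inst M zz l * (1 - p_inst M zz l))"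
proof -
  define p where "p = p_inst M zz l"
  define A where "A = {u \<in> space M. l \<in> zz u}"
  have Zsq: "square_integrable M (Zl zz l)"
    by (rule square_integrable_bounded[OF Z, of 1]) (simp add: Zl_def)
  have A: "A \<in> sets M" "measure M A = p" "measure M (space M - A) = 1 - p"
    using sets_Collect_instrument[OF Z] prob_compl[OF sets_Collect_instrument[OF Z]]
    unfolding A_def p_def p_inst_def by auto
  have Ac: "{u \<in> space M. l \<notin> zz u} = space M - A" by (auto simp: A_def)
  have i1: "(\<integral>u. indicator A u * f u \<partial>M) = (\<integral>u. Zl zz l u * f u \<partial>M)"
    by (intro Bochner_Integration.integral_cong) (auto simp: A_def Zl_def)
  have "(\<integral>u. indicator (space M - A) u * f u \<partial>M) = (\<integral>u. f u - Zl zz l u * f u \<partial>M)"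
    by (intro Bochner_Integration.integral_cong) (auto simp: A_def Zl_def)
  also have "\<dots> = expectation f - (\<integral>u. Zl zz l u * f u \<partial>M)"
    using integrable_if_square_integrable[OF f] integrable_mult_square_integrable[OF Zsq f] by simp
  finally have i2: "(\<integral>u. indicator (space M - A) u * f u \<partial>M)
      = expectation f - (\<integral>u. Zl zz l u * f u \<partial>M)" .
  have cv: "cov M f (Zl zz l) = (\<integral>u. Zl zz l u * f u \<partial>M) - expectation f * p"
    unfolding cov_def p_def expectation_Zl[OF Z, symmetric] by (simp add: mult.commute)
  have "mean_diff M zz f l
      = (\<integral>u. Zl zz l u * f u \<partial>M) / p - (expectation f - (\<integral>u. Zl zz l u * f u \<partial>M)) / (1 - p)"
    unfolding mean_diff_def cond_mean_def A_def[symmetric] Ac i1 i2 A(2,3) ..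
  also have "\<dots> = cov M f (Zl zz l) / (p * (1 - p))"
    unfolding cv using p by (simp add: p_def field_simps)
  finally show ?thesis unfolding p_def .
qed

end

lemma positive_definite_diagonal_pos:
  fixes C :: "nat \<Rightarrow> nat \<Rightarrow> real"
  assumes pd: "\<forall>a :: nat \<Rightarrow> real. (\<exists>l<L. a l \<noteq> 0) \<longrightarrow> (\<Sum>l<L. \<Sum>k<L. a l * a k * C l k) > 0"
    and l: "l < L"
  shows "C l l > 0"
proof -
  define a :: "nat \<Rightarrow> real" where "a k = (if k = l then 1 else 0)" for k
  have e: "a i * a k * C i k = (if i = l then if k = l then C l l else 0 else 0)" for i k
    by (simp add: a_def)
  have inner: "(\<Sum>k<L. if i = l then if k = l then C l l else 0 else 0)
      = (if i = l then C l l else 0)"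
    for i using l by (cases "i = l") simp_all
  have "\<exists>i<L. a i \<noteq> 0" using l by (auto simp: a_def)
  then have "0 < (\<Sum>i<L. \<Sum>k<L. a i * a k * C i k)" using pd by blast
  then show ?thesis unfolding e inner using l by simp
qed

lemma beta_RT_eq_sum_iv_estimate:
  "beta_RT L w y0 y1 dt zz
     = (\<lambda>n \<omega>. \<Sum>l<L. w l * iv_estimate (obsY y0 y1 dt zz) (obsD dt zz) (Zl zz l) n \<omega>)"
  by (simp add: fun_eq_iff beta_RT_def iv_estimate_def)

context prob_space
begin

lemma cov_Zl_self:
  assumes "Zl zz l \<in> borel_measurable M"
  shows "cov M (Zl zz l) (Zl zz l) = p_inst M zz l * (1 - p_inst M zz l)"
proof -
  have "(\<lambda>u. Zl zz l u * Zl zz l u) = Zl zz l" by (auto simp: fun_eq_iff Zl_def)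
  then show ?thesis unfolding cov_def by (simp add: expectation_Zl[OF assms] algebra_simps)
qed

lemma p_inst_bounds_if_positive_definite:
  assumes Z: "Zl zz l \<in> borel_measurable M"
    and pd: "\<forall>a :: nat \<Rightarrow> real. (\<exists>l<L. a l \<noteq> 0) \<longrightarrow>
               (\<Sum>l<L. \<Sum>k<L. a l * a k * cov M (Zl zz l) (Zl zz k)) > 0"
    and "l < L"
  shows "0 < p_inst M zz l \<and> p_inst M zz l < 1"
proof -
  have "0 < p_inst M zz l * (1 - p_inst M zz l)"
    using positive_definite_diagonal_pos[OF pd \<open>l < L\<close>] by (simp add: cov_Zl_self[OF Z])
  then show ?thesis by (auto simp: zero_less_mult_iff)
qed

lemma wald_eq_iv_slope:
  assumes Z: "Zl zz l \<in> borel_measurable M"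
    and Y: "square_integrable M (obsY y0 y1 dt zz)" and D: "square_integrable M (obsD dt zz)"
    and p: "0 < p_inst M zz l" "p_inst M zz l < 1"
  shows "wald M y0 y1 dt zz l = iv_slope M (obsY y0 y1 dt zz) (obsD dt zz) (Zl zz l)"
  using p unfolding wald_def iv_slope_def mean_diff_eq_cov[OF Z Y p] mean_diff_eq_cov[OF Z D p]
  by (cases "cov M (obsD dt zz) (Zl zz l) = 0") (simp_all add: field_simps)

lemma Gamma_wald_eq_integral_iv_influence:
  assumes "Zl zz l \<in> borel_measurable M" "Zl zz k \<in> borel_measurable M"
    and "wald M y0 y1 dt zz l = iv_slope M (obsY y0 y1 dt zz) (obsD dt zz) (Zl zz l)"
    and "wald M y0 y1 dt zz k = iv_slope M (obsY y0 y1 dt zz) (obsD dt zz) (Zl zz k)"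
  shows "Gamma_wald M y0 y1 dt zz l k
           = (\<integral>u. iv_influence M (obsY y0 y1 dt zz) (obsD dt zz) (Zl zz l) u
                  * iv_influence M (obsY y0 y1 dt zz) (obsD dt zz) (Zl zz k) u \<partial>M)"
  unfolding Gamma_wald_def Let_def iv_influence_def iv_residual_def times_divide_times_eq
    expectation_Zl[OF assms(1), symmetric] expectation_Zl[OF assms(2), symmetric] assms(3,4)
  by (simp add: algebra_simps)

lemma
  assumes Z: "Zl zz l \<in> borel_measurable M"
    and Y: "square_integrable M (obsY y0 y1 dt zz)" and D: "square_integrable M (obsD dt zz)"
    and pd: "\<forall>a :: nat \<Rightarrow> real. (\<exists>l<L. a l \<noteq> 0) \<longrightarrow>
               (\<Sum>l<L. \<Sum>k<L. a l * a k * cov M (Zl zz l) (Zl zz k)) > 0"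
    and \<pi>: "mean_diff M zz (obsD dt zz) l > 0" and "l < L"
  shows wald_eq_iv_slope_if_relevant:
      "wald M y0 y1 dt zz l = iv_slope M (obsY y0 y1 dt zz) (obsD dt zz) (Zl zz l)"
    and cov_obsD_Zl_nonzero: "cov M (obsD dt zz) (Zl zz l) \<noteq> 0"
proof -
  have p: "0 < p_inst M zz l" "p_inst M zz l < 1"
    using p_inst_bounds_if_positive_definite[OF Z pd \<open>l < L\<close>] by auto
  show "wald M y0 y1 dt zz l = iv_slope M (obsY y0 y1 dt zz) (obsD dt zz) (Zl zz l)"
    by (rule wald_eq_iv_slope[OF Z Y D p])
  show "cov M (obsD dt zz) (Zl zz l) \<noteq> 0"
    using \<pi> by (auto simp: mean_diff_eq_cov[OF Z D p])
qed

lemma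
  fixes w :: "nat \<Rightarrow> real"
  assumes Z: "\<And>l. Zl zz l \<in> borel_measurable M"
    and Y: "square_integrable M (obsY y0 y1 dt zz)" and D: "square_integrable M (obsD dt zz)"
    and wald: "\<And>l. l < L \<Longrightarrow> wald M y0 y1 dt zz l = iv_slope M (obsY y0 y1 dt zz) (obsD dt zz) (Zl zz l)"
    and \<gamma>: "\<And>l. l < L \<Longrightarrow> cov M (obsD dt zz) (Zl zz l) \<noteq> 0"
  defines "\<psi> \<equiv> \<lambda>u. \<Sum>l<L. w l * iv_influence M (obsY y0 y1 dt zz) (obsD dt zz) (Zl zz l) u"
  shows square_integrable_wald_influence: "square_integrable M \<psi>"
    and expectation_wald_influence: "expectation \<psi> = 0"
    and expectation_square_wald_influence:
      "expectation (\<lambda>u. (\<psi> u)\<^sup>2) = (\<Sum>l<L. \<Sum>k<L. w l * w k * Gamma_wald M y0 y1 dt zz l k)"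
proof -
  have ZB: "\<And>l u. \<bar>Zl zz l u\<bar> \<le> 1" by (simp add: Zl_def)
  let ?\<psi> = "\<lambda>l. iv_influence M (obsY y0 y1 dt zz) (obsD dt zz) (Zl zz l)"
  have \<psi>: "square_integrable M (?\<psi> l)" "expectation (?\<psi> l) = 0" if "l < L" for l
    by (rule square_integrable_iv_influence[OF Y D Z ZB \<gamma>[OF that]],
        rule expectation_iv_influence[OF Y D Z ZB \<gamma>[OF that]])
  show "square_integrable M \<psi>" "expectation \<psi> = 0"
    unfolding \<psi>_def using \<psi>
    by (auto intro!: square_integrable_sum square_integrable_cmult simp: integrable_if_square_integrable)
  have "expectation (\<lambda>u. (\<psi> u)\<^sup>2)
      = (\<Sum>l<L. \<Sum>k<L. w l * w k * expectation (\<lambda>u. ?\<psi> l u * ?\<psi> k u))"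
    unfolding \<psi>_def using \<psi> by (intro integral_square_weighted_sum) auto
  also have "\<dots> = (\<Sum>l<L. \<Sum>k<L. w l * w k * Gamma_wald M y0 y1 dt zz l k)"
    by (intro sum.cong refl) (simp add: Gamma_wald_eq_integral_iv_influence Z wald)
  finally show "expectation (\<lambda>u. (\<psi> u)\<^sup>2) = (\<Sum>l<L. \<Sum>k<L. w l * w k * Gamma_wald M y0 y1 dt zz l k)" .
qed

end

theorem proposition10:
  fixes P :: "'u measure" and L :: nat
    and y0 y1 :: "'u \<Rightarrow> real" and dt :: "'u \<Rightarrow> nat set \<Rightarrow> bool"
    and zz :: "'u \<Rightarrow> nat set" and w :: "nat \<Rightarrow> real"
  assumes P: "prob_space P"
    and L: "L \<ge> 2"
    and zz_range: "\<forall>u \<in> space P. zz u \<subseteq> {..<L}"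
    and A1: "(\<lambda>u. (y0 u, y1 u, restrict (dt u) (Pow {..<L})))
               \<in> measurable P (borel \<Otimes>\<^sub>M borel \<Otimes>\<^sub>M count_space UNIV)
             \<and> zz \<in> measurable P (count_space UNIV)
             \<and> prob_space.indep_set P
                 (gen_sigma P (borel \<Otimes>\<^sub>M borel \<Otimes>\<^sub>M count_space UNIV)
                    (\<lambda>u. (y0 u, y1 u, restrict (dt u) (Pow {..<L}))))
                 (gen_sigma P (count_space UNIV) zz)"
    and A2: "\<forall>u \<in> space P. \<forall>S T. S \<subseteq> T \<and> T \<subseteq> {..<L} \<longrightarrow> dt u S \<longrightarrow> dt u T"
    and A3_p: "\<forall>l<L. p_inst P zz l > 0"
    and A3_pi: "\<forall>l<L. mean_diff P zz (obsD dt zz) l > 0"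
    and A3_Sigma: "\<forall>a :: nat \<Rightarrow> real. (\<exists>l<L. a l \<noteq> 0) \<longrightarrow>
                     (\<Sum>l<L. \<Sum>k<L. a l * a k * cov P (Zl zz l) (Zl zz k)) > 0"
    and Y2: "integrable P (\<lambda>u. (obsY y0 y1 dt zz u)\<^sup>2)"
    and w_simplex: "(\<forall>l<L. w l \<ge> 0) \<and> (\<Sum>l<L. w l) = 1"
  shows "conv_in_prob (PiM UNIV (\<lambda>_. P)) (\<lambda>n. beta_RT L w y0 y1 dt zz n)
           (\<Sum>l<L. w l * wald P y0 y1 dt zz l)
       \<and> weak_conv_m
           (\<lambda>n. distr (PiM UNIV (\<lambda>_. P)) borel
              (\<lambda>\<omega>. sqrt (real n) * (beta_RT L w y0 y1 dt zz n \<omega>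
                                        - (\<Sum>l<L. w l * wald P y0 y1 dt zz l))))
           (normal_measure (\<Sum>l<L. \<Sum>k<L. w l * w k * Gamma_wald P y0 y1 dt zz l k))"
proof -
  interpret iid_sample P by (rule iid_sample.intro[OF P])
  let ?Y = "obsY y0 y1 dt zz" and ?D = "obsD dt zz"
  note meas [measurable] =
    borel_measurable_observables[OF conjunct1[OF A1] conjunct1[OF conjunct2[OF A1]] zz_range]
  have Y: "square_integrable P ?Y" using meas(3) Y2 by (simp add: square_integrable_def)
  have D: "square_integrable P ?D"
    by (rule P.square_integrable_bounded[OF meas(2), of 1]) (simp add: obsD_def)
  have Z: "\<And>l u. \<bar>Zl zz l u\<bar> \<le> 1" by (simp add: Zl_def)
  note wald = P.wald_eq_iv_slope_if_relevant[OF meas(1) Y D A3_Sigma, OF A3_pi[rule_format]]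
  note \<gamma> = P.cov_obsD_Zl_nonzero[OF meas(1) Y D A3_Sigma, OF A3_pi[rule_format]]
  have AL: "asymptotically_linear P (beta_RT L w y0 y1 dt zz) (\<Sum>l<L. w l * wald P y0 y1 dt zz l)
      (\<lambda>u. \<Sum>l<L. w l * iv_influence P ?Y ?D (Zl zz l) u)"
    unfolding beta_RT_eq_sum_iv_estimate
    by (rule asymptotically_linear_sum)
      (simp_all add: wald \<gamma> asymptotically_linear_iv_estimate[OF Y D meas(1) Z])
  note \<psi> = P.square_integrable_wald_influence[OF meas(1) Y D wald \<gamma>]
    P.expectation_wald_influence[OF meas(1) Y D wald \<gamma>]
  have "beta_RT L w y0 y1 dt zz n \<in> borel_measurable sample_space" for n
    unfolding beta_RT_def samp_cov_def by measurable
  then show ?thesis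
    using asymptotically_linear_imp_conv_in_prob[OF AL \<psi>]
      asymptotically_linear_imp_weak_conv_m[OF AL \<psi>]
      P.expectation_square_wald_influence[OF meas(1) Y D wald \<gamma>]
    by simp
qed

end
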